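(* Let $N$ be a positive integer, $L_1\ge\cdots\ge L_K$ nonnegative integers with $L_1\le N$, and $M=\sum_i L_i$. Then $c((N^{L_1}),\ldots,(N^{L_K});(M^N))=c((N^{N-L_1}),\ldots,(N^{N-L_K});((KN-M)^N))$.
   Context: Littlewood–Richardson coefficients are defined by $\prod_i s_{\lambda^i}=\sum_\mu c(\lambda^1,\ldots,\lambda^K;\mu)s_\mu$ for Schur polynomials $s_\lambda$; $(a^b)$ denotes the rectangular partition with $b$ parts equal to $a$ (empty if $b=0$). *)

theory Defs
  imports Main "HOL-Library.Poly_Mapping"
begin

text \<open>Polynomials in variables x_0, x_1, ... with integer coefficients:
  monomials are finitely supported exponent vectors nat =>0 nat.\<close>
type_synonym ipoly = "(nat \<Rightarrow>\<^sub>0 nat) \<Rightarrow>\<^sub>0 int"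

definition var :: "nat \<Rightarrow> ipoly" where
  "var k = Poly_Mapping.single (Poly_Mapping.single k 1) 1"

definition is_partition :: "nat list \<Rightarrow> bool" where
  "is_partition lam \<longleftrightarrow> sorted_wrt (\<ge>) lam \<and> (\<forall>x\<in>set lam. 0 < x)"

definition partitions_of :: "nat \<Rightarrow> nat list set" where
  "partitions_of m = {lam. is_partition lam \<and> sum_list lam = m}"

text \<open>Cells (row i, column j) of the Young diagram, 0-indexed.\<close>
definition cells :: "nat list \<Rightarrow> (nat \<times> nat) set" where
  "cells lam = {(i, j). i < length lam \<and> j < lam ! i}"

definition SSYT :: "nat \<Rightarrow> nat list \<Rightarrow> (nat \<times> nat \<Rightarrow> nat) set" where
  "SSYT n lam = {T. (\<forall>c. c \<notin> cells lam \<longrightarrow> T c = 0)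
     \<and> (\<forall>c\<in>cells lam. T c < n)
     \<and> (\<forall>i j. (i, j) \<in> cells lam \<and> (i, Suc j) \<in> cells lam \<longrightarrow> T (i, j) \<le> T (i, Suc j))
     \<and> (\<forall>i j. (i, j) \<in> cells lam \<and> (Suc i, j) \<in> cells lam \<longrightarrow> T (i, j) < T (Suc i, j))}"

definition schur :: "nat \<Rightarrow> nat list \<Rightarrow> ipoly" where
  "schur n lam = (\<Sum>T\<in>SSYT n lam. \<Prod>c\<in>cells lam. var (T c))"

text \<open>We work with
  m = |lam^1|+...+|lam^K| variables, enough so that all Schur polynomials of
  partitions of m are linearly independent; the product is homogeneous of degree m,
  so its expansion involves only partitions of m, and the coefficient is 0 for
  mu not a partition of m.\<close>
definition LR_coeff :: "nat list list \<Rightarrow> nat list \<Rightarrow> int" where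
  "LR_coeff lams mu =
     (let m = sum_list (map sum_list lams) in
      THE c. \<exists>d :: nat list \<Rightarrow> int.
        prod_list (map (schur m) lams) = (\<Sum>nu\<in>partitions_of m. of_int (d nu) * schur m nu)
        \<and> c = (if mu \<in> partitions_of m then d mu else 0))"

definition rect :: "nat \<Rightarrow> nat \<Rightarrow> nat list" where
  "rect a b = (if a = 0 then [] else replicate b a)"

end

theory Submission
  imports Defs
begin

text \<open>
  Rotating the complement of a partition nu inside the N \<times> a box by a half turn gives a partition
  nu', and complementing columns is a bijection between semistandard tableaux of shape nu and weight
  b and those of shape nu' and weight (a, ..., a) - b, all entries below N.  Applied factor by factor
  to the rectangles (N^L_i), whose complements in the N \<times> N square are (N^(N - L_i)), this
  identifies the coefficient of x^g in the product of the complementary Schur polynomials with the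
  coefficient of x^(a - g) in the original product, where a = K N.

  In N variables the original product is symmetric (Bender-Knuth involutions) and Kostka matrices are
  unitriangular, so it is a sum of e nu times s nu; every nu occurring has at most N rows and first
  part at most a: each value occurs at most once per column of a tableau, and the lexicographically
  largest nu occurring is itself the weight of a tuple of tableaux.
  Complementing each nu expands the complementary product with coefficients e nu'.  LR coefficients
  indexed by partitions with at most N rows can be read off in N variables, and the complement of
  (M^N) is ((K N - M)^N), so both sides equal e (M^N).
\<close>

section \<open>Schur polynomials as sums over tableaux\<close>

definition part :: "nat list \<Rightarrow> nat \<Rightarrow> nat" where
  "part lam i = (if i < length lam then lam!i else 0)"

lemma cells_eq_part: "cells lam = {(i, j). j < part lam i}"
  by (auto simp: cells_def part_def split: if_splits)

lemma part_antimono: "is_partition lam \<Longrightarrow> i \<le> i' \<Longrightarrow> part lam i' \<le> part lam i"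
  unfolding part_def is_partition_def
  by (cases "i = i'") (auto, metis sorted_wrt_nth_less le_neq_implies_less order.strict_trans1)

lemma part_pos_iff: "is_partition lam \<Longrightarrow> (0 < part lam i) = (i < length lam)"
  unfolding part_def is_partition_def by auto

lemma cells_sub: "cells lam \<subseteq> (SIGMA i:{..<length lam}. {..<lam!i})"
  by (auto simp: cells_def)

lemma finite_cells[simp]: "finite (cells lam)"
  by (rule finite_subset[OF cells_sub]) auto

lemma card_cells: "card (cells lam) = sum_list lam"
proof -
  have "cells lam = (SIGMA i:{..<length lam}. {..<lam!i})" by (auto simp: cells_def)
  hence "card (cells lam) = (\<Sum>i<length lam. lam!i)" by (simp add: card_SigmaI)
  also have "\<dots> = sum_list lam" by (simp add: sum_list_sum_nth atLeast0LessThan)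
  finally show ?thesis .
qed

definition weight :: "nat list \<Rightarrow> (nat \<times> nat \<Rightarrow> nat) \<Rightarrow> nat \<Rightarrow>\<^sub>0 nat" where
  "weight lam T = (\<Sum>c\<in>cells lam. Poly_Mapping.single (T c) 1)"

lemma lookup_weight: "Poly_Mapping.lookup (weight lam T) x = card {c\<in>cells lam. T c = x}"
proof -
  have "Poly_Mapping.lookup (weight lam T) x = (\<Sum>c\<in>cells lam. if T c = x then 1 else 0)"
    unfolding weight_def lookup_sum by (auto simp: lookup_single when_def intro!: sum.cong)
  also have "\<dots> = card {c\<in>cells lam. T c = x}"
    by (simp add: sum.If_cases Int_def)
  finally show ?thesis .
qed

lemma prod_var_eq_single: "finite A \<Longrightarrow> (\<Prod>c\<in>A. var (f c)) = Poly_Mapping.single (\<Sum>c\<in>A. Poly_Mapping.single (f c) 1) 1"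
proof (induction A rule: finite_induct)
  case empty
  then show ?case by simp
next
  case (insert x F)
  then show ?case by (simp add: var_def mult_single)
qed

lemma schur_eq_sum_weights: "schur n lam = (\<Sum>T\<in>SSYT n lam. Poly_Mapping.single (weight lam T) 1)"
  unfolding schur_def weight_def by (simp add: prod_var_eq_single)

lemma finite_SSYT[simp]: "finite (SSYT n lam)"
proof -
  have "SSYT n lam \<subseteq> {f. \<forall>x. (x \<in> cells lam \<longrightarrow> f x \<in> {..<n}) \<and> (x \<notin> cells lam \<longrightarrow> f x = 0)}"
    by (auto simp: SSYT_def)
  thus ?thesis by (rule finite_subset) (rule finite_set_of_finite_funs, auto)
qed

lemma lookup_sum_single: "finite A \<Longrightarrow>
   Poly_Mapping.lookup (\<Sum>x\<in>A. Poly_Mapping.single (w x) (1::int)) b = int (card {x\<in>A. w x = b})"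
proof -
  assume "finite A"
  have "Poly_Mapping.lookup (\<Sum>x\<in>A. Poly_Mapping.single (w x) (1::int)) b = (\<Sum>x\<in>A. if w x = b then 1 else 0)"
    unfolding lookup_sum by (auto simp: lookup_single when_def intro!: sum.cong)
  also have "\<dots> = int (card {x\<in>A. w x = b})"
    using \<open>finite A\<close> by (simp add: sum.If_cases Int_def)
  finally show ?thesis .
qed

definition kostka :: "nat \<Rightarrow> nat list \<Rightarrow> (nat \<Rightarrow>\<^sub>0 nat) \<Rightarrow> nat" where
  "kostka n lam b = card {T\<in>SSYT n lam. weight lam T = b}"

lemma lookup_schur: "Poly_Mapping.lookup (schur n lam) b = int (kostka n lam b)"
  by (simp add: schur_eq_sum_weights lookup_sum_single kostka_def)

fun tableau_tuples :: "nat \<Rightarrow> nat list list \<Rightarrow> (nat \<times> nat \<Rightarrow> nat) list set" where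
  "tableau_tuples n [] = {[]}"
| "tableau_tuples n (l#ls) = (\<lambda>(T, Ts). T # Ts) ` (SSYT n l \<times> tableau_tuples n ls)"

fun tuple_weight :: "nat list list \<Rightarrow> (nat \<times> nat \<Rightarrow> nat) list \<Rightarrow> nat \<Rightarrow>\<^sub>0 nat" where
  "tuple_weight (l#ls) (T#Ts) = weight l T + tuple_weight ls Ts"
| "tuple_weight _ _ = 0"

lemma finite_tableau_tuples[simp]: "finite (tableau_tuples n ls)"
  by (induction ls) auto

lemma prod_schur_eq_sum_tuples: "prod_list (map (schur n) ls) = (\<Sum>Ts\<in>tableau_tuples n ls. Poly_Mapping.single (tuple_weight ls Ts) 1)"
proof (induction ls)
  case Nil
  then show ?case by simp
next
  case (Cons l ls)
  have inj: "inj_on (\<lambda>(T, Ts). T # Ts) (SSYT n l \<times> tableau_tuples n ls)"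
    by (auto simp: inj_on_def)
  have "prod_list (map (schur n) (l#ls)) = schur n l * (\<Sum>Ts\<in>tableau_tuples n ls. Poly_Mapping.single (tuple_weight ls Ts) 1)"
    using Cons by simp
  also have "\<dots> = (\<Sum>T\<in>SSYT n l. \<Sum>Ts\<in>tableau_tuples n ls. Poly_Mapping.single (weight l T + tuple_weight ls Ts) 1)"
    by (simp add: schur_eq_sum_weights sum_product mult_single)
  also have "\<dots> = (\<Sum>p\<in>SSYT n l \<times> tableau_tuples n ls. Poly_Mapping.single (tuple_weight (l#ls) ((\<lambda>(T, Ts). T # Ts) p)) 1)"
    by (simp add: sum.cartesian_product split_def)
  also have "\<dots> = (\<Sum>Ts\<in>tableau_tuples n (l#ls). Poly_Mapping.single (tuple_weight (l#ls) Ts) 1)"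
    by (simp add: sum.reindex[OF inj])
  finally show ?case .
qed

definition prod_coeff :: "nat \<Rightarrow> nat list list \<Rightarrow> (nat \<Rightarrow>\<^sub>0 nat) \<Rightarrow> nat" where
  "prod_coeff n ls b = card {Ts\<in>tableau_tuples n ls. tuple_weight ls Ts = b}"

lemma lookup_prod_schur: "Poly_Mapping.lookup (prod_list (map (schur n) ls)) b = int (prod_coeff n ls b)"
  by (simp add: prod_schur_eq_sum_tuples lookup_sum_single prod_coeff_def)

lemma lookup_ofint_mult: "Poly_Mapping.lookup (of_int c * (p::ipoly)) b = c * Poly_Mapping.lookup p b"
proof -
  have "of_int c * p = Poly_Mapping.map ((*) c) p"
    by (simp add: mult_map_scale_conv_mult flip: single_of_int)
  thus ?thesis by (simp add: Poly_Mapping.map.rep_eq when_def)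
qed

section \<open>Ranks in finite sets of naturals\<close>

definition rank :: "nat set \<Rightarrow> nat \<Rightarrow> nat" where
  "rank X x = card {y\<in>X. y < x}"

definition nth_least :: "nat set \<Rightarrow> nat \<Rightarrow> nat" where
  "nth_least X i = sorted_list_of_set X ! i"

lemma nth_least_in: "finite X \<Longrightarrow> i < card X \<Longrightarrow> nth_least X i \<in> X"
  unfolding nth_least_def
  by (metis length_sorted_list_of_set nth_mem set_sorted_list_of_set)

lemma nth_least_strict_mono: "finite X \<Longrightarrow> i < j \<Longrightarrow> j < card X \<Longrightarrow> nth_least X i < nth_least X j"
  unfolding nth_least_def
  by (metis length_sorted_list_of_set sorted_wrt_nth_less strict_sorted_list_of_set)

lemma nth_least_surj: "finite X \<Longrightarrow> x \<in> X \<Longrightarrow> \<exists>i<card X. nth_least X i = x"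
  unfolding nth_least_def
  by (metis in_set_conv_nth length_sorted_list_of_set set_sorted_list_of_set)

lemma nth_least_less_iff: "finite X \<Longrightarrow> i < card X \<Longrightarrow> j < card X \<Longrightarrow> nth_least X i < nth_least X j \<longleftrightarrow> i < j"
  by (metis linorder_neq_iff order_less_asym nth_least_strict_mono)

lemma nth_least_eq_iff: "finite X \<Longrightarrow> i < card X \<Longrightarrow> j < card X \<Longrightarrow> nth_least X i = nth_least X j \<longleftrightarrow> i = j"
  by (metis linorder_neq_iff order_less_irrefl nth_least_strict_mono)

lemma nth_least_image: "finite X \<Longrightarrow> nth_least X ` {..<card X} = X"
  using nth_least_in nth_least_surj by fastforce

lemma rank_nth_least: assumes "finite X" "i < card X" shows "rank X (nth_least X i) = i"
proof -
  have "{y\<in>X. y < nth_least X i} = nth_least X ` {..<i}"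
  proof
    show "{y \<in> X. y < nth_least X i} \<subseteq> nth_least X ` {..<i}"
    proof
      fix y assume "y \<in> {y \<in> X. y < nth_least X i}"
      then obtain j where j: "j < card X" "nth_least X j = y" "y < nth_least X i"
        using nth_least_surj[OF assms(1)] by auto
      hence "j < i" using nth_least_less_iff[OF assms(1) j(1) assms(2)] by auto
      thus "y \<in> nth_least X ` {..<i}" using j by auto
    qed
  next
    show "nth_least X ` {..<i} \<subseteq> {y \<in> X. y < nth_least X i}"
      using assms nth_least_in nth_least_strict_mono by auto
  qed
  moreover have "inj_on (nth_least X) {..<i}"
    using assms by (auto simp: inj_on_def nth_least_eq_iff)
  ultimately show ?thesis by (simp add: rank_def card_image)
qed

lemma nth_least_rank: assumes "finite X" "x \<in> X" "rank X x = i" shows "nth_least X i = x"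
proof -
  obtain j where j: "j < card X" "nth_least X j = x" using nth_least_surj[OF assms(1,2)] by blast
  have "rank X x = j" using rank_nth_least[OF assms(1) j(1)] j(2) by simp
  thus ?thesis using j assms(3) by simp
qed

lemma rank_mono: "finite X \<Longrightarrow> x \<le> x' \<Longrightarrow> rank X x \<le> rank X x'"
  unfolding rank_def by (rule card_mono) auto

lemma rank_le_card: "finite X \<Longrightarrow> rank X x \<le> card X"
  unfolding rank_def by (rule card_mono) auto

lemma rank_Suc_nth_least: assumes "finite X" "i < card X" shows "rank X (Suc (nth_least X i)) = Suc i"
proof -
  have "{y\<in>X. y < Suc (nth_least X i)} = insert (nth_least X i) {y\<in>X. y < nth_least X i}"
    using nth_least_in[OF assms] by auto
  moreover have "nth_least X i \<notin> {y\<in>X. y < nth_least X i}" by simp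
  moreover have "finite {y\<in>X. y < nth_least X i}" using assms(1) by simp
  ultimately have "rank X (Suc (nth_least X i)) = Suc (rank X (nth_least X i))" unfolding rank_def by simp
  thus ?thesis using rank_nth_least[OF assms] by simp
qed

lemma nth_least_less_of_rank: assumes "finite X" "r < rank X x" shows "nth_least X r < x"
proof (rule ccontr)
  assume "\<not> nth_least X r < x"
  have "r < card X" using assms rank_le_card[OF assms(1), of x] by linarith
  have "x \<le> nth_least X r" using \<open>\<not> nth_least X r < x\<close> by simp
  hence "rank X x \<le> rank X (nth_least X r)" by (rule rank_mono[OF assms(1)])
  thus False using rank_nth_least[OF assms(1) \<open>r < card X\<close>] assms(2) by simp
qed

lemma nth_least_le_of_rank_le:
  assumes fA: "finite A" and fB: "finite B" and d: "\<forall>x. rank B x \<le> rank A x" and i: "i < card B"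
  shows "nth_least A i \<le> nth_least B i"
proof (rule ccontr)
  assume "\<not> nth_least A i \<le> nth_least B i"
  hence le: "Suc (nth_least B i) \<le> nth_least A i" by simp
  have "rank B (Suc (nth_least B i)) \<le> rank A (Suc (nth_least B i))" using d by (rule spec)
  hence c1: "Suc i \<le> rank A (Suc (nth_least B i))" using rank_Suc_nth_least[OF fB i] by simp
  hence "i < card A" using rank_le_card[OF fA, of "Suc (nth_least B i)"] by simp
  have "rank A (Suc (nth_least B i)) \<le> rank A (nth_least A i)" using rank_mono[OF fA le] .
  thus False using rank_nth_least[OF fA \<open>i < card A\<close>] c1 by simp
qed

lemma rank_le_of_nth_least_le:
  assumes fA: "finite A" and fB: "finite B" and d: "\<forall>r<card B. nth_least A r \<le> nth_least B r"
    and c: "card B \<le> card A"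
  shows "rank B x \<le> rank A x"
proof -
  let ?k = "rank B x"
  have kB: "?k \<le> card B" by (rule rank_le_card[OF fB])
  have "nth_least A ` {..<?k} \<subseteq> {y\<in>A. y < x}"
  proof
    fix y assume "y \<in> nth_least A ` {..<?k}"
    then obtain r where r: "r < ?k" "y = nth_least A r" by auto
    have "nth_least B r < x" by (rule nth_least_less_of_rank[OF fB r(1)])
    moreover have "nth_least A r \<le> nth_least B r" using d r kB by auto
    moreover have "nth_least A r \<in> A" using nth_least_in[OF fA] r kB c by auto
    ultimately show "y \<in> {y\<in>A. y < x}" using r by auto
  qed
  moreover have "inj_on (nth_least A) {..<?k}"
    using kB c fA by (auto simp: inj_on_def nth_least_eq_iff)
  ultimately have "card (nth_least A ` {..<?k}) \<le> rank A x"
    unfolding rank_def by (intro card_mono) auto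
  thus ?thesis using \<open>inj_on (nth_least A) {..<?k}\<close> by (simp add: card_image)
qed

lemma rank_Diff: assumes "finite C" "A \<subseteq> C" shows "rank (C - A) x + rank A x = rank C x"
proof -
  have "{y\<in>C. y < x} = {y\<in>C - A. y < x} \<union> {y\<in>A. y < x}" using assms by auto
  moreover have "finite {y\<in>C - A. y < x}" "finite {y\<in>A. y < x}" using assms finite_subset by auto
  moreover have "{y\<in>C - A. y < x} \<inter> {y\<in>A. y < x} = {}" by auto
  ultimately show ?thesis unfolding rank_def by (simp add: card_Un_disjoint)
qed

lemma nth_least_Diff_le:
  assumes C: "finite C" "A \<subseteq> C" "B \<subseteq> C"
    and dom: "\<forall>r<card B. nth_least A r \<le> nth_least B r" "card B \<le> card A"
    and i: "i < card (C - A)"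
  shows "nth_least (C - B) i \<le> nth_least (C - A) i"
proof (rule nth_least_le_of_rank_le)
  have fin: "finite A" "finite B" using C finite_subset by auto
  show "\<forall>x. rank (C - A) x \<le> rank (C - B) x"
  proof
    fix x
    have "rank B x \<le> rank A x" by (rule rank_le_of_nth_least_le[OF fin(1,2) dom])
    moreover have "rank (C - A) x + rank A x = rank C x" "rank (C - B) x + rank B x = rank C x"
      using rank_Diff C by blast+
    ultimately show "rank (C - A) x \<le> rank (C - B) x" by linarith
  qed
qed (use C i in auto)

lemma nth_least_image_strict_mono:
  assumes mono: "\<And>i j. i < j \<Longrightarrow> j < h \<Longrightarrow> f i < f j" and "i < h"
  shows "nth_least (f ` {..<h}) i = f i"
proof -
  have sorted: "sorted_wrt (<) (map f [0..<h])" using mono by (simp add: sorted_wrt_iff_nth_less)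
  then have "distinct (map f [0..<h])" by (simp add: strict_sorted_iff)
  moreover have "set (map f [0..<h]) = f ` {..<h}" by (auto simp: atLeast0LessThan)
  ultimately have "sorted_list_of_set (f ` {..<h}) = map f [0..<h]"
    using sorted by (subst sorted_list_of_set_unique[symmetric]) (auto dest: distinct_card)
  then show ?thesis using \<open>i < h\<close> by (simp add: nth_least_def)
qed

lemma mem_downset_iff_rank:
  assumes fF: "finite F" and DF: "D \<subseteq> F" and dc: "\<And>j j'. j \<in> D \<Longrightarrow> j' \<in> F \<Longrightarrow> j' \<le> j \<Longrightarrow> j' \<in> D"
    and j: "j \<in> F"
  shows "j \<in> D \<longleftrightarrow> rank F j < card D"
proof
  assume jD: "j \<in> D"
  have "{y\<in>F. y < j} \<subseteq> D - {j}" using dc[OF jD] by auto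
  hence "rank F j \<le> card (D - {j})" unfolding rank_def
    by (intro card_mono) (use fF DF finite_subset in auto)
  also have "\<dots> < card D" using jD fF DF finite_subset by (intro card_Diff1_less) auto
  finally show "rank F j < card D" .
next
  assume lt: "rank F j < card D"
  show "j \<in> D"
  proof (rule ccontr)
    assume jD: "j \<notin> D"
    have "D \<subseteq> {y\<in>F. y < j}"
    proof
      fix d assume d: "d \<in> D"
      have "\<not> j \<le> d"
      proof
        assume "j \<le> d" thus False using dc[OF d j] jD by simp
      qed
      thus "d \<in> {y\<in>F. y < j}" using d DF by auto
    qed
    hence "card D \<le> rank F j" unfolding rank_def by (intro card_mono) (use fF in auto)
    thus False using lt by simp
  qed
qed

lemma card_rank_less:
  assumes fF: "finite F"
  shows "card {j\<in>F. rank F j < s} = min s (card F)"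
proof -
  have "{j\<in>F. rank F j < s} = nth_least F ` {..<min s (card F)}"
  proof
    show "{j\<in>F. rank F j < s} \<subseteq> nth_least F ` {..<min s (card F)}"
    proof
      fix j assume "j \<in> {j\<in>F. rank F j < s}"
      hence jF: "j \<in> F" and js: "rank F j < s" by auto
      obtain r where r: "r < card F" "nth_least F r = j" using nth_least_surj[OF fF jF] by blast
      have "rank F j = r" using rank_nth_least[OF fF r(1)] r(2) by simp
      hence "r \<in> {..<min s (card F)}" using r js by simp
      thus "j \<in> nth_least F ` {..<min s (card F)}" using r(2) by blast
    qed
    show "nth_least F ` {..<min s (card F)} \<subseteq> {j\<in>F. rank F j < s}"
    proof
      fix j assume "j \<in> nth_least F ` {..<min s (card F)}"
      then obtain r where r: "r < s" "r < card F" "j = nth_least F r" by auto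
      show "j \<in> {j\<in>F. rank F j < s}" using nth_least_in[OF fF r(2)] rank_nth_least[OF fF r(2)] r by simp
    qed
  qed
  moreover have "inj_on (nth_least F) {..<min s (card F)}"
  proof (rule inj_onI)
    fix x y assume "x \<in> {..<min s (card F)}" "y \<in> {..<min s (card F)}" "nth_least F x = nth_least F y"
    thus "x = y" using nth_least_eq_iff[OF fF, of x y] by simp
  qed
  ultimately show ?thesis by (simp add: card_image)
qed

lemma SSYT_zero: "T \<in> SSYT n lam \<Longrightarrow> c \<notin> cells lam \<Longrightarrow> T c = 0"
  unfolding SSYT_def by blast

lemma SSYT_less: "T \<in> SSYT n lam \<Longrightarrow> c \<in> cells lam \<Longrightarrow> T c < n"
  unfolding SSYT_def by blast

lemma SSYT_row: "T \<in> SSYT n lam \<Longrightarrow> (i, j) \<in> cells lam \<Longrightarrow> (i, Suc j) \<in> cells lam \<Longrightarrow> T (i, j) \<le> T (i, Suc j)"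
  unfolding SSYT_def by blast

lemma SSYT_col: "T \<in> SSYT n lam \<Longrightarrow> (i, j) \<in> cells lam \<Longrightarrow> (Suc i, j) \<in> cells lam \<Longrightarrow> T (i, j) < T (Suc i, j)"
  unfolding SSYT_def by blast

lemma cells_downward_closed: "is_partition lam \<Longrightarrow> (i, j) \<in> cells lam \<Longrightarrow> i' \<le> i \<Longrightarrow> j' \<le> j \<Longrightarrow> (i', j') \<in> cells lam"
  unfolding cells_eq_part using part_antimono[of lam i' i] by auto

lemma SSYT_row_mono:
  assumes T: "T \<in> SSYT n lam" and p: "is_partition lam"
  shows "(i, j') \<in> cells lam \<Longrightarrow> j \<le> j' \<Longrightarrow> T (i, j) \<le> T (i, j')"
proof (induction j' arbitrary: j)
  case 0
  then show ?case by simp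
next
  case (Suc j')
  show ?case
  proof (cases "j = Suc j'")
    case False
    hence "j \<le> j'" using Suc by simp
    have c: "(i, j') \<in> cells lam" using cells_downward_closed[OF p Suc.prems(1)] by simp
    have "T (i, j) \<le> T (i, j')" using Suc.IH[OF c \<open>j \<le> j'\<close>] .
    also have "\<dots> \<le> T (i, Suc j')" using SSYT_row[OF T c Suc.prems(1)] .
    finally show ?thesis .
  qed simp
qed

lemma SSYT_col_strict_mono:
  assumes T: "T \<in> SSYT n lam" and p: "is_partition lam"
  shows "(i', j) \<in> cells lam \<Longrightarrow> i < i' \<Longrightarrow> T (i, j) < T (i', j)"
proof (induction i' arbitrary: i)
  case 0
  then show ?case by simp
next
  case (Suc i')
  have c: "(i', j) \<in> cells lam" using cells_downward_closed[OF p Suc.prems(1)] by simp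
  have s: "T (i', j) < T (Suc i', j)" using SSYT_col[OF T c Suc.prems(1)] .
  show ?case
  proof (cases "i = i'")
    case False
    hence "i < i'" using Suc by simp
    thus ?thesis using Suc.IH[OF c, of i] s by simp
  qed (use s in simp)
qed

definition col_len :: "nat list \<Rightarrow> nat \<Rightarrow> nat" where
  "col_len lam j = card {i. j < part lam i}"

lemma part_gt_set_eq: "is_partition lam \<Longrightarrow> {i. j < part lam i} = {..<col_len lam j}"
proof -
  assume p: "is_partition lam"
  have fin: "finite {i. j < part lam i}"
    by (rule finite_subset[of _ "{..<length lam}"]) (auto simp: part_def split: if_splits)
  have down: "j < part lam i'" if "i' \<le> i" "j < part lam i" for i i'
    using part_antimono[OF p, of i' i] that by linarith
  show ?thesis
  proof (cases "{i. j < part lam i} = {}")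
    case True
    then show ?thesis by (simp add: col_len_def)
  next
    case False
    define m where "m = Max {i. j < part lam i}"
    have mm: "m \<in> {i. j < part lam i}" using Max_in[OF fin False] m_def by simp
    have "{i. j < part lam i} = {..m}"
    proof
      show "{i. j < part lam i} \<subseteq> {..m}" using Max_ge[OF fin] m_def by auto
      show "{..m} \<subseteq> {i. j < part lam i}" using down mm by auto
    qed
    thus ?thesis by (simp add: col_len_def lessThan_Suc_atMost)
  qed
qed

lemma cells_iff_col_len: "is_partition lam \<Longrightarrow> (i, j) \<in> cells lam \<longleftrightarrow> i < col_len lam j"
  using part_gt_set_eq[of lam j] unfolding cells_eq_part by auto

lemma col_len_antimono: "is_partition lam \<Longrightarrow> j \<le> j' \<Longrightarrow> col_len lam j' \<le> col_len lam j"
proof -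
  assume p: "is_partition lam" and jj: "j \<le> j'"
  have "{i. j' < part lam i} \<subseteq> {i. j < part lam i}" using jj by auto
  moreover have "finite {i. j < part lam i}" using part_gt_set_eq[OF p] by simp
  ultimately show ?thesis unfolding col_len_def by (rule card_mono[rotated])
qed

definition col_entries :: "nat list \<Rightarrow> (nat \<times> nat \<Rightarrow> nat) \<Rightarrow> nat \<Rightarrow> nat set" where
  "col_entries lam T j = (\<lambda>i. T (i, j)) ` {..<col_len lam j}"

lemma col_entries_props:
  assumes T: "T \<in> SSYT n lam" and p: "is_partition lam"
  shows "col_entries lam T j \<subseteq> {..<n}" "finite (col_entries lam T j)" "card (col_entries lam T j) = col_len lam j"
    "i < col_len lam j \<Longrightarrow> nth_least (col_entries lam T j) i = T (i, j)"
proof -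
  show "col_entries lam T j \<subseteq> {..<n}"
    using SSYT_less[OF T] cells_iff_col_len[OF p] by (auto simp: col_entries_def)
  show "finite (col_entries lam T j)" by (simp add: col_entries_def)
  have mono: "\<And>i i'. i < i' \<Longrightarrow> i' < col_len lam j \<Longrightarrow> T (i, j) < T (i', j)"
    using SSYT_col_strict_mono[OF T p] cells_iff_col_len[OF p] by blast
  have "inj_on (\<lambda>i. T (i, j)) {..<col_len lam j}"
  proof (rule inj_onI)
    fix x y assume "x \<in> {..<col_len lam j}" "y \<in> {..<col_len lam j}" "T (x, j) = T (y, j)"
    thus "x = y" using mono[of x y] mono[of y x]
      by (cases x y rule: linorder_cases) auto
  qed
  thus "card (col_entries lam T j) = col_len lam j" by (simp add: col_entries_def card_image)
  show "i < col_len lam j \<Longrightarrow> nth_least (col_entries lam T j) i = T (i, j)"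
    unfolding col_entries_def by (rule nth_least_image_strict_mono[OF mono])
qed

lemma card_entries_eq_card_cols:
  assumes T: "T \<in> SSYT n lam" and p: "is_partition lam"
  shows "card {c\<in>cells lam. T c = x} = card {j. x \<in> col_entries lam T j}"
proof -
  have "bij_betw snd {c\<in>cells lam. T c = x} {j. x \<in> col_entries lam T j}"
  proof (rule bij_betwI')
    fix c d assume "c \<in> {c\<in>cells lam. T c = x}" "d \<in> {c\<in>cells lam. T c = x}"
    thus "(snd c = snd d) = (c = d)"
    proof (cases c, cases d)
      fix i j i' j' assume cd: "c = (i, j)" "d = (i', j')"
      show ?thesis
      proof
        assume "snd c = snd d"
        hence "j = j'" using cd by simp
        thus "c = d" using \<open>c \<in> _\<close> \<open>d \<in> _\<close> cd SSYT_col_strict_mono[OF T p, of i' j i] SSYT_col_strict_mono[OF T p, of i j i']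
          by (cases i i' rule: linorder_cases) auto
      qed simp
    qed
  next
    fix c assume "c \<in> {c\<in>cells lam. T c = x}"
    thus "snd c \<in> {j. x \<in> col_entries lam T j}"
      using cells_iff_col_len[OF p] by (cases c) (auto simp: col_entries_def)
  next
    fix j assume "j \<in> {j. x \<in> col_entries lam T j}"
    then obtain i where "i < col_len lam j" "T (i, j) = x" by (auto simp: col_entries_def)
    thus "\<exists>c\<in>{c\<in>cells lam. T c = x}. j = snd c"
      using cells_iff_col_len[OF p] by force
  qed
  thus ?thesis by (rule bij_betw_same_card)
qed

section \<open>Symmetry: the Bender-Knuth involution\<close>

definition swap_adj :: "nat \<Rightarrow> nat \<Rightarrow> nat" where
  "swap_adj k x = (if x = k then Suc k else if x = Suc k then k else x)"

lemma swap_adj_swap_adj[simp]: "swap_adj k (swap_adj k x) = x"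
  by (simp add: swap_adj_def)

lemma inj_swap_adj: "inj (swap_adj k)"
  by (metis injI swap_adj_swap_adj)

definition swap_var :: "nat \<Rightarrow> (nat \<Rightarrow>\<^sub>0 nat) \<Rightarrow> (nat \<Rightarrow>\<^sub>0 nat)" where
  "swap_var k b = Poly_Mapping.map_key (swap_adj k) b"

lemma lookup_swap_var: "Poly_Mapping.lookup (swap_var k b) x = Poly_Mapping.lookup b (swap_adj k x)"
  unfolding swap_var_def Poly_Mapping.map_key.rep_eq[OF inj_swap_adj] by simp

lemma swap_var_swap_var[simp]: "swap_var k (swap_var k b) = b"
  by (rule poly_mapping_eqI) (simp add: lookup_swap_var)

lemma swap_var_0[simp]: "swap_var k 0 = 0"
  by (rule poly_mapping_eqI) (simp add: lookup_swap_var)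

lemma swap_var_add: "swap_var k (a + b) = swap_var k a + swap_var k b"
  by (rule poly_mapping_eqI) (simp add: lookup_swap_var lookup_add)

definition paired_top :: "nat list \<Rightarrow> nat \<Rightarrow> (nat \<times> nat \<Rightarrow> nat) \<Rightarrow> nat \<Rightarrow> nat \<Rightarrow> bool" where
  "paired_top lam k T i j \<longleftrightarrow> (i, j) \<in> cells lam \<and> T (i, j) = k \<and> (Suc i, j) \<in> cells lam \<and> T (Suc i, j) = Suc k"

definition paired_bottom :: "nat list \<Rightarrow> nat \<Rightarrow> (nat \<times> nat \<Rightarrow> nat) \<Rightarrow> nat \<Rightarrow> nat \<Rightarrow> bool" where
  "paired_bottom lam k T i j \<longleftrightarrow> (i, j) \<in> cells lam \<and> T (i, j) = Suc k \<and> 0 < i \<and> (i - 1, j) \<in> cells lam \<and> T (i - 1, j) = k"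

definition free_cell :: "nat list \<Rightarrow> nat \<Rightarrow> (nat \<times> nat \<Rightarrow> nat) \<Rightarrow> nat \<Rightarrow> nat \<Rightarrow> bool" where
  "free_cell lam k T i j \<longleftrightarrow> (i, j) \<in> cells lam \<and> (T (i, j) = k \<or> T (i, j) = Suc k) \<and> \<not> paired_top lam k T i j \<and> \<not> paired_bottom lam k T i j"

definition free_cols :: "nat list \<Rightarrow> nat \<Rightarrow> (nat \<times> nat \<Rightarrow> nat) \<Rightarrow> nat \<Rightarrow> nat set" where
  "free_cols lam k T i = {j. free_cell lam k T i j}"

definition free_succ_count :: "nat list \<Rightarrow> nat \<Rightarrow> (nat \<times> nat \<Rightarrow> nat) \<Rightarrow> nat \<Rightarrow> nat" where
  "free_succ_count lam k T i = card {j\<in>free_cols lam k T i. T (i, j) = Suc k}"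

text \<open>In each row the free cells carry a run of r entries k followed by s entries k + 1;
  the involution rewrites it as s entries k followed by r entries k + 1.\<close>

definition bender_knuth :: "nat list \<Rightarrow> nat \<Rightarrow> (nat \<times> nat \<Rightarrow> nat) \<Rightarrow> (nat \<times> nat \<Rightarrow> nat)" where
  "bender_knuth lam k T = (\<lambda>(i, j). if free_cell lam k T i j then (if rank (free_cols lam k T i) j < free_succ_count lam k T i then k else Suc k) else T (i, j))"

lemma finite_free_cols: "finite (free_cols lam k T i)"
proof (rule finite_subset)
  show "free_cols lam k T i \<subseteq> {..<part lam i}" by (auto simp: free_cols_def free_cell_def cells_eq_part)
qed simp

lemma free_cell_in_cells: "free_cell lam k T i j \<Longrightarrow> (i, j) \<in> cells lam"
  by (simp add: free_cell_def)

lemma bender_knuth_not_free: "\<not> free_cell lam k T i j \<Longrightarrow> bender_knuth lam k T (i, j) = T (i, j)"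
  by (simp add: bender_knuth_def)

lemma bender_knuth_free: "free_cell lam k T i j \<Longrightarrow> bender_knuth lam k T (i, j) = (if rank (free_cols lam k T i) j < free_succ_count lam k T i then k else Suc k)"
  by (simp add: bender_knuth_def)

lemma card_paired_top_eq_card_paired_bottom:
  "card {(i, j). paired_top lam k T i j} = card {(i, j). paired_bottom lam k T i j}"
proof (rule bij_betw_same_card)
  show "bij_betw (\<lambda>(i, j). (Suc i, j)) {(i, j). paired_top lam k T i j} {(i, j). paired_bottom lam k T i j}"
  proof (rule bij_betw_byWitness[where f' = "\<lambda>(i, j). (i - 1, j)"])
    show "(\<lambda>(i, j). (i - 1, j)) ` {(i, j). paired_bottom lam k T i j} \<subseteq> {(i, j). paired_top lam k T i j}"
    proof clarify
      fix i j assume "paired_bottom lam k T i j"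
      then show "paired_top lam k T (i - 1) j"
        by (cases i) (auto simp: paired_top_def paired_bottom_def)
    qed
  qed (auto simp: paired_top_def paired_bottom_def)
qed

locale bender_knuth_step =
  fixes n lam k T
  assumes T: "T \<in> SSYT n lam" and p: "is_partition lam" and kn: "Suc k < n"
begin

abbreviation "T' \<equiv> bender_knuth lam k T"

lemma col_step: "(Suc i, j) \<in> cells lam \<Longrightarrow> T (i, j) < T (Suc i, j)"
  using SSYT_col_strict_mono[OF T p, of "Suc i" j i] by simp

lemma cell_above: "(Suc i, j) \<in> cells lam \<Longrightarrow> (i, j) \<in> cells lam"
  using cells_downward_closed[OF p, of "Suc i" j i j] by simp

lemma paired_top_left_closed:
  assumes "paired_top lam k T i j" "j' \<le> j" "T (i, j') = k"
  shows "paired_top lam k T i j'"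
proof -
  have c1: "(Suc i, j) \<in> cells lam" "T (Suc i, j) = Suc k" using assms(1) by (auto simp: paired_top_def)
  have c2: "(Suc i, j') \<in> cells lam" using cells_downward_closed[OF p c1(1) order.refl assms(2)] .
  have c3: "(i, j') \<in> cells lam" using cell_above[OF c2] .
  have "T (Suc i, j') \<le> T (Suc i, j)" using SSYT_row_mono[OF T p c1(1) assms(2)] .
  moreover have "T (i, j') < T (Suc i, j')" using col_step[OF c2] .
  ultimately have "T (Suc i, j') = Suc k" using c1(2) assms(3) by simp
  thus ?thesis using c2 c3 assms(3) by (simp add: paired_top_def)
qed

lemma paired_bottom_right_closed:
  assumes "paired_bottom lam k T i j" "j \<le> j'" "(i, j') \<in> cells lam" "T (i, j') = Suc k"
  shows "paired_bottom lam k T i j'"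
proof -
  have c1: "0 < i" "(i - 1, j) \<in> cells lam" "T (i - 1, j) = k" using assms(1) by (auto simp: paired_bottom_def)
  have c2: "(i - 1, j') \<in> cells lam" using cells_downward_closed[OF p assms(3), of "i - 1" j'] by simp
  have "T (i - 1, j) \<le> T (i - 1, j')" using SSYT_row_mono[OF T p c2 assms(2)] .
  moreover have "T (i - 1, j') < T (i, j')" using col_step[of "i - 1" j'] assms(3) c1(1) by simp
  ultimately have "T (i - 1, j') = k" using c1(3) assms(4) by simp
  thus ?thesis using c1 c2 assms(3,4) by (simp add: paired_bottom_def)
qed

lemma below_free_k:
  assumes "free_cell lam k T i j" "T (i, j) = k" "(Suc i, j) \<in> cells lam"
  shows "Suc (Suc k) \<le> T (Suc i, j)"
proof -
  have "T (i, j) < T (Suc i, j)" using col_step[OF assms(3)] .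
  moreover have "T (Suc i, j) \<noteq> Suc k" using assms by (auto simp: free_cell_def paired_top_def)
  ultimately show ?thesis using assms(2) by simp
qed

lemma above_free_Suc_k:
  assumes "free_cell lam k T (Suc i) j" "T (Suc i, j) = Suc k"
  shows "T (i, j) < k"
proof -
  have c: "(Suc i, j) \<in> cells lam" using assms(1) free_cell_in_cells by blast
  have "T (i, j) < T (Suc i, j)" using col_step[OF c] .
  moreover have "T (i, j) \<noteq> k" using assms cell_above[OF c] by (auto simp: free_cell_def paired_bottom_def)
  ultimately show ?thesis using assms(2) by simp
qed

lemma BK_free_value: "free_cell lam k T i j \<Longrightarrow> T' (i, j) = k \<or> T' (i, j) = Suc k"
  by (simp add: bender_knuth_free)

lemma BK_k_or_Suc_k_iff: "(T' (i, j) = k \<or> T' (i, j) = Suc k) \<longleftrightarrow> (T (i, j) = k \<or> T (i, j) = Suc k)"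
proof (cases "free_cell lam k T i j")
  case True
  then show ?thesis using BK_free_value[OF True] by (simp add: free_cell_def)
next
  case False
  then show ?thesis by (simp add: bender_knuth_not_free)
qed

lemma paired_top_BK_iff: "paired_top lam k T' i j \<longleftrightarrow> paired_top lam k T i j"
proof
  assume a: "paired_top lam k T' i j"
  hence c: "(i, j) \<in> cells lam" "(Suc i, j) \<in> cells lam" "T' (i, j) = k" "T' (Suc i, j) = Suc k"
    by (auto simp: paired_top_def)
  have "T (i, j) = k \<or> T (i, j) = Suc k" using BK_k_or_Suc_k_iff[of i j] c by simp
  moreover have "T (Suc i, j) = k \<or> T (Suc i, j) = Suc k" using BK_k_or_Suc_k_iff[of "Suc i" j] c by simp
  moreover have "T (i, j) < T (Suc i, j)" using col_step[OF c(2)] .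
  ultimately have "T (i, j) = k" "T (Suc i, j) = Suc k" by auto
  thus "paired_top lam k T i j" using c by (simp add: paired_top_def)
next
  assume a: "paired_top lam k T i j"
  hence c: "(i, j) \<in> cells lam" "(Suc i, j) \<in> cells lam" "T (i, j) = k" "T (Suc i, j) = Suc k"
    by (auto simp: paired_top_def)
  have "paired_bottom lam k T (Suc i) j" using c by (simp add: paired_bottom_def)
  hence "\<not> free_cell lam k T (Suc i) j" "\<not> free_cell lam k T i j" using a by (auto simp: free_cell_def)
  thus "paired_top lam k T' i j" using c by (simp add: paired_top_def bender_knuth_not_free)
qed

lemma paired_bottom_BK_iff: "paired_bottom lam k T' i j \<longleftrightarrow> paired_bottom lam k T i j"
proof
  assume a: "paired_bottom lam k T' i j"
  hence c: "(i, j) \<in> cells lam" "0 < i" "(i - 1, j) \<in> cells lam" "T' (i, j) = Suc k" "T' (i - 1, j) = k"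
    by (auto simp: paired_bottom_def)
  obtain i' where i': "i = Suc i'" using c(2) by (cases i) auto
  have "T (i, j) = k \<or> T (i, j) = Suc k" using BK_k_or_Suc_k_iff[of i j] c by simp
  moreover have "T (i', j) = k \<or> T (i', j) = Suc k" using BK_k_or_Suc_k_iff[of i' j] c i' by simp
  moreover have "T (i', j) < T (i, j)" using col_step[of i' j] c(1) i' by simp
  ultimately have "T (i', j) = k" "T (i, j) = Suc k" by auto
  thus "paired_bottom lam k T i j" using c i' by (simp add: paired_bottom_def)
next
  assume a: "paired_bottom lam k T i j"
  hence c: "(i, j) \<in> cells lam" "0 < i" "(i - 1, j) \<in> cells lam" "T (i, j) = Suc k" "T (i - 1, j) = k"
    by (auto simp: paired_bottom_def)
  obtain i' where i': "i = Suc i'" using c(2) by (cases i) auto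
  have "paired_top lam k T i' j" using c i' by (simp add: paired_top_def)
  hence "\<not> free_cell lam k T i' j" "\<not> free_cell lam k T i j" using a i' by (auto simp: free_cell_def)
  thus "paired_bottom lam k T' i j" using c i' by (simp add: paired_bottom_def bender_knuth_not_free)
qed

lemma free_cell_BK_iff: "free_cell lam k T' i j \<longleftrightarrow> free_cell lam k T i j"
  unfolding free_cell_def using BK_k_or_Suc_k_iff[of i j] paired_top_BK_iff[of i j] paired_bottom_BK_iff[of i j] by blast

lemma free_cols_BK: "free_cols lam k T' i = free_cols lam k T i"
  unfolding free_cols_def using free_cell_BK_iff by blast

lemma free_k_left_closed:
  assumes "j \<in> free_cols lam k T i" "j' \<in> free_cols lam k T i" "j' \<le> j" "T (i, j) = k"
  shows "T (i, j') = k"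
proof -
  have "(i, j) \<in> cells lam" "T (i, j') = k \<or> T (i, j') = Suc k" using assms by (auto simp: free_cols_def free_cell_def)
  moreover have "T (i, j') \<le> T (i, j)" using SSYT_row_mono[OF T p] calculation(1) assms(3) by simp
  ultimately show ?thesis using assms(4) by auto
qed

lemma free_succ_count_le: "free_succ_count lam k T i \<le> card (free_cols lam k T i)"
  unfolding free_succ_count_def by (rule card_mono[OF finite_free_cols]) auto

lemma eq_k_iff_rank:
  assumes "j \<in> free_cols lam k T i"
  shows "T (i, j) = k \<longleftrightarrow> rank (free_cols lam k T i) j < card (free_cols lam k T i) - free_succ_count lam k T i"
proof -
  let ?F = "free_cols lam k T i"
  let ?D = "{j\<in>?F. T (i, j) = k}"
  have fin: "finite ?F" by (rule finite_free_cols)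
  have split: "?F = ?D \<union> {j\<in>?F. T (i, j) = Suc k}" by (auto simp: free_cols_def free_cell_def)
  have "card ?F = card ?D + free_succ_count lam k T i"
    unfolding free_succ_count_def by (subst split, rule card_Un_disjoint) (use fin in auto)
  hence cD: "card ?D = card ?F - free_succ_count lam k T i" by simp
  have "j \<in> ?D \<longleftrightarrow> rank ?F j < card ?D"
    by (rule mem_downset_iff_rank[OF fin _ _ assms]) (use free_k_left_closed in auto)
  thus ?thesis using assms cD by simp
qed

lemma free_before_nonfree:
  assumes "(i, j) \<in> cells lam" "(i, Suc j) \<in> cells lam"
    and f1: "free_cell lam k T i j" and f2: "\<not> free_cell lam k T i (Suc j)"
  shows "Suc k \<le> T (i, Suc j)"
proof (rule ccontr)
  assume "\<not> Suc k \<le> T (i, Suc j)"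
  moreover have "k \<le> T (i, j)" using f1 by (auto simp: free_cell_def)
  moreover have "T (i, j) \<le> T (i, Suc j)" using SSYT_row[OF T] assms(1,2) .
  ultimately have tk: "T (i, Suc j) = k" "T (i, j) = k" by auto
  then have "paired_top lam k T i (Suc j)" using f2 assms(2) by (auto simp: free_cell_def paired_bottom_def)
  then have "paired_top lam k T i j" using paired_top_left_closed[of i "Suc j" j] tk by simp
  then show False using f1 by (simp add: free_cell_def)
qed

lemma nonfree_before_free:
  assumes "(i, j) \<in> cells lam" "(i, Suc j) \<in> cells lam"
    and f1: "\<not> free_cell lam k T i j" and f2: "free_cell lam k T i (Suc j)"
  shows "T (i, j) \<le> k"
proof (rule ccontr)
  assume "\<not> T (i, j) \<le> k"
  moreover have "T (i, Suc j) \<le> Suc k" using f2 by (auto simp: free_cell_def)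
  moreover have "T (i, j) \<le> T (i, Suc j)" using SSYT_row[OF T] assms(1,2) .
  ultimately have tk: "T (i, j) = Suc k" "T (i, Suc j) = Suc k" by auto
  then have "paired_bottom lam k T i j" using f1 assms(1) by (auto simp: free_cell_def paired_top_def)
  then have "paired_bottom lam k T i (Suc j)" using paired_bottom_right_closed[of i j "Suc j"] tk assms by simp
  then show False using f2 by (simp add: free_cell_def)
qed

lemma BK_row_mono:
  assumes "(i, j) \<in> cells lam" "(i, Suc j) \<in> cells lam"
  shows "T' (i, j) \<le> T' (i, Suc j)"
proof -
  have row: "T (i, j) \<le> T (i, Suc j)" using SSYT_row[OF T] assms by simp
  show ?thesis
  proof (cases "free_cell lam k T i j"; cases "free_cell lam k T i (Suc j)")
    assume f1: "free_cell lam k T i j" and f2: "free_cell lam k T i (Suc j)"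
    let ?F = "free_cols lam k T i"
    have "j \<in> ?F" using f1 by (simp add: free_cols_def)
    hence "rank ?F j < rank ?F (Suc j)"
    proof -
      have "{y\<in>?F. y < Suc j} = insert j {y\<in>?F. y < j}" using \<open>j \<in> ?F\<close> by auto
      moreover have "finite {y\<in>?F. y < j}" using finite_free_cols by simp
      ultimately show ?thesis unfolding rank_def by simp
    qed
    thus ?thesis using bender_knuth_free[OF f1] bender_knuth_free[OF f2] by auto
  next
    assume f1: "\<not> free_cell lam k T i j" and f2: "\<not> free_cell lam k T i (Suc j)"
    thus ?thesis using row by (simp add: bender_knuth_not_free)
  next
    assume f1: "free_cell lam k T i j" and f2: "\<not> free_cell lam k T i (Suc j)"
    have "T' (i, j) \<le> Suc k" using BK_free_value[OF f1] by auto
    moreover have "Suc k \<le> T (i, Suc j)" by (rule free_before_nonfree[OF assms f1 f2])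
    ultimately show ?thesis using f2 by (simp add: bender_knuth_not_free)
  next
    assume f1: "\<not> free_cell lam k T i j" and f2: "free_cell lam k T i (Suc j)"
    have "k \<le> T' (i, Suc j)" using BK_free_value[OF f2] by auto
    moreover have "T (i, j) \<le> k" by (rule nonfree_before_free[OF assms f1 f2])
    ultimately show ?thesis using f1 by (simp add: bender_knuth_not_free)
  qed
qed

lemma BK_col_strict_mono:
  assumes "(i, j) \<in> cells lam" "(Suc i, j) \<in> cells lam"
  shows "T' (i, j) < T' (Suc i, j)"
proof -
  have col: "T (i, j) < T (Suc i, j)" using col_step assms by simp
  show ?thesis
  proof (cases "free_cell lam k T i j"; cases "free_cell lam k T (Suc i) j")
    assume f1: "free_cell lam k T i j" and f2: "free_cell lam k T (Suc i) j"
    have "T (i, j) = k \<or> T (i, j) = Suc k" "T (Suc i, j) = k \<or> T (Suc i, j) = Suc k"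
      using f1 f2 by (auto simp: free_cell_def)
    hence "T (i, j) = k" "T (Suc i, j) = Suc k" using col by auto
    hence "paired_top lam k T i j" using assms by (simp add: paired_top_def)
    thus ?thesis using f1 by (simp add: free_cell_def)
  next
    assume f1: "\<not> free_cell lam k T i j" and f2: "\<not> free_cell lam k T (Suc i) j"
    thus ?thesis using col by (simp add: bender_knuth_not_free)
  next
    assume f1: "free_cell lam k T i j" and f2: "\<not> free_cell lam k T (Suc i) j"
    have "T' (i, j) \<le> Suc k" using BK_free_value[OF f1] by auto
    moreover have "Suc (Suc k) \<le> T (Suc i, j)"
    proof (cases "T (i, j) = k")
      case True
      then show ?thesis using below_free_k[OF f1 True] assms by simp
    next
      case False
      hence "T (i, j) = Suc k" using f1 by (simp add: free_cell_def)
      then show ?thesis using col by simp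
    qed
    ultimately show ?thesis using f2 by (simp add: bender_knuth_not_free)
  next
    assume f1: "\<not> free_cell lam k T i j" and f2: "free_cell lam k T (Suc i) j"
    have "k \<le> T' (Suc i, j)" using BK_free_value[OF f2] by auto
    moreover have "T (i, j) < k"
    proof (cases "T (Suc i, j) = Suc k")
      case True
      then show ?thesis using above_free_Suc_k[OF f2 True] by simp
    next
      case False
      hence "T (Suc i, j) = k" using f2 by (simp add: free_cell_def)
      then show ?thesis using col by simp
    qed
    ultimately show ?thesis using f1 by (simp add: bender_knuth_not_free)
  qed
qed

lemma BK_SSYT: "T' \<in> SSYT n lam"
  unfolding SSYT_def
proof (intro CollectI conjI allI impI ballI)
  fix c assume "c \<notin> cells lam"
  thus "T' c = 0"
  proof (cases c)
    case (Pair i j)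
    hence "\<not> free_cell lam k T i j" using \<open>c \<notin> cells lam\<close> free_cell_in_cells by blast
    thus ?thesis using Pair bender_knuth_not_free SSYT_zero[OF T \<open>c \<notin> cells lam\<close>] by simp
  qed
next
  fix c assume c: "c \<in> cells lam"
  show "T' c < n"
  proof (cases c)
    case (Pair i j)
    show ?thesis
    proof (cases "free_cell lam k T i j")
      case True
      then show ?thesis using BK_free_value[OF True] kn Pair by auto
    next
      case False
      then show ?thesis using bender_knuth_not_free SSYT_less[OF T c] Pair by simp
    qed
  qed
next
  fix i j assume "(i, j) \<in> cells lam \<and> (i, Suc j) \<in> cells lam"
  then show "T' (i, j) \<le> T' (i, Suc j)" by (intro BK_row_mono) auto
next
  fix i j assume "(i, j) \<in> cells lam \<and> (Suc i, j) \<in> cells lam"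
  then show "T' (i, j) < T' (Suc i, j)" by (intro BK_col_strict_mono) auto
qed

lemma free_succ_count_BK: "free_succ_count lam k T' i = card (free_cols lam k T i) - free_succ_count lam k T i"
proof -
  let ?F = "free_cols lam k T i"
  have "{j\<in>free_cols lam k T' i. T' (i, j) = Suc k} = ?F - {j\<in>?F. rank ?F j < free_succ_count lam k T i}"
    using bender_knuth_free unfolding free_cols_BK by (auto simp: free_cols_def)
  hence "free_succ_count lam k T' i = card (?F - {j\<in>?F. rank ?F j < free_succ_count lam k T i})" by (simp add: free_succ_count_def)
  also have "\<dots> = card ?F - card {j\<in>?F. rank ?F j < free_succ_count lam k T i}"
    by (rule card_Diff_subset) (use finite_free_cols in auto)
  also have "\<dots> = card ?F - free_succ_count lam k T i" using card_rank_less[OF finite_free_cols] free_succ_count_le by simp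
  finally show ?thesis .
qed

lemma BK_involution: "bender_knuth lam k T' = T"
proof
  fix c :: "nat \<times> nat"
  obtain i j where c: "c = (i, j)" by (cases c)
  show "bender_knuth lam k T' c = T c"
  proof (cases "free_cell lam k T i j")
    case True
    have fT': "free_cell lam k T' i j" using True free_cell_BK_iff by simp
    have jF: "j \<in> free_cols lam k T i" using True by (simp add: free_cols_def)
    have "bender_knuth lam k T' (i, j) = (if rank (free_cols lam k T i) j < card (free_cols lam k T i) - free_succ_count lam k T i then k else Suc k)"
      using bender_knuth_free[OF fT'] free_cols_BK free_succ_count_BK by simp
    also have "\<dots> = T (i, j)" using eq_k_iff_rank[OF jF] True by (auto simp: free_cell_def)
    finally show ?thesis using c by simp
  next
    case False
    hence "\<not> free_cell lam k T' i j" using free_cell_BK_iff by simp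
    thus ?thesis using c False by (simp add: bender_knuth_not_free)
  qed
qed

lemma card_by_rows: "E \<subseteq> cells lam \<Longrightarrow> card E = (\<Sum>i<length lam. card {j. (i, j) \<in> E})"
proof -
  assume E: "E \<subseteq> cells lam"
  have "E = (SIGMA i:{..<length lam}. {j. (i, j) \<in> E})" using E by (auto simp: cells_def)
  moreover have "finite {j. (i, j) \<in> E}" for i
    by (rule finite_subset[of _ "snd ` cells lam"]) (use E in force, simp)
  ultimately show ?thesis by (metis card_SigmaI finite_lessThan)
qed

lemma BK_eq_iff_other:
  assumes "x \<noteq> k" "x \<noteq> Suc k"
  shows "T' c = x \<longleftrightarrow> T c = x"
proof (cases c)
  case (Pair i j)
  then show ?thesis
    using assms BK_free_value[of i j] bender_knuth_not_free[of lam k T i j]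
    by (cases "free_cell lam k T i j") (auto simp: free_cell_def)
qed

lemma card_free_BK_k:
  "card {(i, j). free_cell lam k T i j \<and> T' (i, j) = k}
   = card {(i, j). free_cell lam k T i j \<and> T (i, j) = Suc k}" (is "card ?A = card ?B")
proof -
  have "card {j. (i, j) \<in> ?A} = card {j. (i, j) \<in> ?B}" for i
  proof -
    let ?F = "free_cols lam k T i"
    have "{j. (i, j) \<in> ?A} = {j\<in>?F. rank ?F j < free_succ_count lam k T i}"
      using bender_knuth_free by (auto simp: free_cols_def split: if_splits)
    then have "card {j. (i, j) \<in> ?A} = free_succ_count lam k T i"
      using card_rank_less[OF finite_free_cols] free_succ_count_le by simp
    also have "\<dots> = card {j. (i, j) \<in> ?B}" by (simp add: free_succ_count_def free_cols_def)
    finally show ?thesis .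
  qed
  moreover have "?A \<subseteq> cells lam" "?B \<subseteq> cells lam" by (auto simp: free_cell_def)
  ultimately show ?thesis by (simp add: card_by_rows)
qed

lemma card_BK_k: "card {c\<in>cells lam. T' c = k} = card {c\<in>cells lam. T c = Suc k}"
proof -
  let ?P = "{(i, j). paired_top lam k T i j}" and ?P1 = "{(i, j). paired_bottom lam k T i j}"
  let ?A = "{(i, j). free_cell lam k T i j \<and> T' (i, j) = k}" and ?B = "{(i, j). free_cell lam k T i j \<and> T (i, j) = Suc k}"
  have e1: "{c\<in>cells lam. T' c = k} = ?P \<union> ?A"
  proof -
    have "c \<in> {c\<in>cells lam. T' c = k} \<longleftrightarrow> c \<in> ?P \<union> ?A" for c
    proof (cases c)
      case (Pair i j)
      show ?thesis
      proof (cases "free_cell lam k T i j")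
        case True
        then show ?thesis using Pair free_cell_in_cells[OF True] by (auto simp: free_cell_def)
      next
        case False
        hence "T' (i, j) = T (i, j)" by (rule bender_knuth_not_free)
        then show ?thesis using Pair False by (auto simp: free_cell_def paired_top_def paired_bottom_def)
      qed
    qed
    thus ?thesis by blast
  qed
  have e2: "{c\<in>cells lam. T c = Suc k} = ?P1 \<union> ?B"
  proof -
    have "c \<in> {c\<in>cells lam. T c = Suc k} \<longleftrightarrow> c \<in> ?P1 \<union> ?B" for c
      by (cases c) (auto simp: free_cell_def paired_top_def paired_bottom_def)
    thus ?thesis by blast
  qed
  have sub: "?P \<subseteq> cells lam" "?A \<subseteq> cells lam" "?P1 \<subseteq> cells lam" "?B \<subseteq> cells lam"
    by (auto simp: paired_top_def paired_bottom_def free_cell_def)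
  have fin: "finite ?P" "finite ?A" "finite ?P1" "finite ?B"
    using sub finite_subset[OF _ finite_cells] by auto
  have d1: "?P \<inter> ?A = {}" by (auto simp: free_cell_def)
  have d2: "?P1 \<inter> ?B = {}" by (auto simp: free_cell_def)
  show ?thesis unfolding e1 e2 using card_Un_disjoint[OF fin(1,2) d1] card_Un_disjoint[OF fin(3,4) d2] card_paired_top_eq_card_paired_bottom card_free_BK_k
    by simp
qed

end

lemma bender_knuth_props:
  assumes T: "T \<in> SSYT n lam" and p: "is_partition lam" and kn: "Suc k < n"
  shows "bender_knuth lam k T \<in> SSYT n lam" "bender_knuth lam k (bender_knuth lam k T) = T" "weight lam (bender_knuth lam k T) = swap_var k (weight lam T)"
proof -
  interpret A: bender_knuth_step n lam k T by unfold_locales (rule assms)+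
  show "bender_knuth lam k T \<in> SSYT n lam" by (rule A.BK_SSYT)
  show bb: "bender_knuth lam k (bender_knuth lam k T) = T" by (rule A.BK_involution)
  interpret B: bender_knuth_step n lam k "bender_knuth lam k T" by unfold_locales (rule A.BK_SSYT, rule p, rule kn)
  have c1: "card {c\<in>cells lam. bender_knuth lam k T c = k} = card {c\<in>cells lam. T c = Suc k}" by (rule A.card_BK_k)
  have c2: "card {c\<in>cells lam. bender_knuth lam k T c = Suc k} = card {c\<in>cells lam. T c = k}"
    using B.card_BK_k bb by simp
  show "weight lam (bender_knuth lam k T) = swap_var k (weight lam T)"
  proof (rule poly_mapping_eqI)
    fix x
    show "Poly_Mapping.lookup (weight lam (bender_knuth lam k T)) x = Poly_Mapping.lookup (swap_var k (weight lam T)) x"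
    proof (cases "x = k \<or> x = Suc k")
      case True
      then show ?thesis using c1 c2 by (auto simp: lookup_weight lookup_swap_var swap_adj_def)
    next
      case False
      have "{c\<in>cells lam. bender_knuth lam k T c = x} = {c\<in>cells lam. T c = x}"
        using A.BK_eq_iff_other False by blast
      then show ?thesis using False by (simp add: lookup_weight lookup_swap_var swap_adj_def)
    qed
  qed
qed

lemma kostka_swap_var:
  assumes p: "is_partition lam" and kn: "Suc k < n"
  shows "kostka n lam (swap_var k b) = kostka n lam b"
proof -
  have "bij_betw (bender_knuth lam k) {T\<in>SSYT n lam. weight lam T = b} {T\<in>SSYT n lam. weight lam T = swap_var k b}"
  proof (rule bij_betw_byWitness[where f' = "bender_knuth lam k"])
    show "\<forall>T\<in>{T\<in>SSYT n lam. weight lam T = b}. bender_knuth lam k (bender_knuth lam k T) = T" using bender_knuth_props(2)[OF _ p kn] by simp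
    show "\<forall>T\<in>{T\<in>SSYT n lam. weight lam T = swap_var k b}. bender_knuth lam k (bender_knuth lam k T) = T" using bender_knuth_props(2)[OF _ p kn] by simp
    show "bender_knuth lam k ` {T\<in>SSYT n lam. weight lam T = b} \<subseteq> {T\<in>SSYT n lam. weight lam T = swap_var k b}"
      using bender_knuth_props(1,3)[OF _ p kn] by auto
    show "bender_knuth lam k ` {T\<in>SSYT n lam. weight lam T = swap_var k b} \<subseteq> {T\<in>SSYT n lam. weight lam T = b}"
    proof
      fix T' assume "T' \<in> bender_knuth lam k ` {T\<in>SSYT n lam. weight lam T = swap_var k b}"
      then obtain T where T: "T \<in> SSYT n lam" "weight lam T = swap_var k b" "T' = bender_knuth lam k T" by auto
      have "weight lam T' = swap_var k (swap_var k b)" using bender_knuth_props(3)[OF T(1) p kn] T by simp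
      thus "T' \<in> {T\<in>SSYT n lam. weight lam T = b}" using bender_knuth_props(1)[OF T(1) p kn] T by simp
    qed
  qed
  thus ?thesis unfolding kostka_def by (simp add: bij_betw_same_card)
qed

fun bender_knuth_tuple :: "nat \<Rightarrow> nat list list \<Rightarrow> (nat \<times> nat \<Rightarrow> nat) list \<Rightarrow> (nat \<times> nat \<Rightarrow> nat) list" where
  "bender_knuth_tuple k (l#ls) (T#Ts) = bender_knuth l k T # bender_knuth_tuple k ls Ts"
| "bender_knuth_tuple k _ _ = []"

lemma bender_knuth_tuple_props:
  assumes "\<forall>l\<in>set ls. is_partition l" and kn: "Suc k < n"
  shows "Ts \<in> tableau_tuples n ls \<Longrightarrow> bender_knuth_tuple k ls Ts \<in> tableau_tuples n ls \<and> bender_knuth_tuple k ls (bender_knuth_tuple k ls Ts) = Ts \<and> tuple_weight ls (bender_knuth_tuple k ls Ts) = swap_var k (tuple_weight ls Ts)"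
  using assms(1)
proof (induction ls arbitrary: Ts)
  case Nil
  then show ?case by simp
next
  case (Cons l ls)
  from Cons.prems obtain T Ts' where Ts: "Ts = T # Ts'" and T: "T \<in> SSYT n l" and Ts': "Ts' \<in> tableau_tuples n ls"
    by auto
  have pl: "is_partition l" using Cons.prems by simp
  have IH: "bender_knuth_tuple k ls Ts' \<in> tableau_tuples n ls \<and> bender_knuth_tuple k ls (bender_knuth_tuple k ls Ts') = Ts' \<and> tuple_weight ls (bender_knuth_tuple k ls Ts') = swap_var k (tuple_weight ls Ts')"
    using Cons.IH[OF Ts'] Cons.prems by simp
  show ?case using Ts IH bender_knuth_props[OF T pl kn] by (auto simp: swap_var_add)
qed

lemma prod_coeff_swap_var:
  assumes "\<forall>l\<in>set ls. is_partition l" and kn: "Suc k < n"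
  shows "prod_coeff n ls (swap_var k b) = prod_coeff n ls b"
proof -
  note P = bender_knuth_tuple_props[OF assms]
  have "bij_betw (bender_knuth_tuple k ls) {Ts\<in>tableau_tuples n ls. tuple_weight ls Ts = b} {Ts\<in>tableau_tuples n ls. tuple_weight ls Ts = swap_var k b}"
  proof (rule bij_betw_byWitness[where f' = "bender_knuth_tuple k ls"])
    show "\<forall>T\<in>{Ts\<in>tableau_tuples n ls. tuple_weight ls Ts = b}. bender_knuth_tuple k ls (bender_knuth_tuple k ls T) = T" using P by simp
    show "\<forall>T\<in>{Ts\<in>tableau_tuples n ls. tuple_weight ls Ts = swap_var k b}. bender_knuth_tuple k ls (bender_knuth_tuple k ls T) = T" using P by simp
    show "bender_knuth_tuple k ls ` {Ts\<in>tableau_tuples n ls. tuple_weight ls Ts = b} \<subseteq> {Ts\<in>tableau_tuples n ls. tuple_weight ls Ts = swap_var k b}"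
      using P by auto
    show "bender_knuth_tuple k ls ` {Ts\<in>tableau_tuples n ls. tuple_weight ls Ts = swap_var k b} \<subseteq> {Ts\<in>tableau_tuples n ls. tuple_weight ls Ts = b}"
    proof
      fix T' assume "T' \<in> bender_knuth_tuple k ls ` {Ts\<in>tableau_tuples n ls. tuple_weight ls Ts = swap_var k b}"
      then obtain T where T: "T \<in> tableau_tuples n ls" "tuple_weight ls T = swap_var k b" "T' = bender_knuth_tuple k ls T" by auto
      thus "T' \<in> {Ts\<in>tableau_tuples n ls. tuple_weight ls Ts = b}" using P[OF T(1)] by simp
    qed
  qed
  thus ?thesis unfolding prod_coeff_def by (simp add: bij_betw_same_card)
qed

definition lex_less :: "nat \<Rightarrow> (nat \<Rightarrow> nat) \<Rightarrow> (nat \<Rightarrow> nat) \<Rightarrow> bool" where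
  "lex_less p f g \<longleftrightarrow> (\<exists>i<p. (\<forall>t<i. f t = g t) \<and> f i < g i)"

lemma lex_less_irrefl: "\<not> lex_less p f f"
  by (simp add: lex_less_def)

lemma lex_less_trans: assumes "lex_less p f g" "lex_less p g h" shows "lex_less p f h"
proof -
  obtain i1 where i1: "i1 < p" "\<forall>t<i1. f t = g t" "f i1 < g i1" using assms(1) by (auto simp: lex_less_def)
  obtain i2 where i2: "i2 < p" "\<forall>t<i2. g t = h t" "g i2 < h i2" using assms(2) by (auto simp: lex_less_def)
  show ?thesis
  proof (cases i1 i2 rule: linorder_cases)
    case less
    then show ?thesis unfolding lex_less_def using i1 i2 by (intro exI[of _ i1]) auto
  next
    case equal
    then show ?thesis unfolding lex_less_def using i1 i2 by (intro exI[of _ i1]) auto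
  next
    case greater
    then show ?thesis unfolding lex_less_def using i1 i2 by (intro exI[of _ i2]) auto
  qed
qed

lemma lex_less_asym: "lex_less p f g \<Longrightarrow> lex_less p g f \<Longrightarrow> False"
  using lex_less_irrefl lex_less_trans by metis

lemma lex_less_imp_le_0: "lex_less p f g \<Longrightarrow> f 0 \<le> g 0"
  unfolding lex_less_def by (metis le_eq_less_or_eq neq0_conv order_refl)

lemma lex_less_total: "(\<forall>t<p. f t = g t) \<or> lex_less p f g \<or> lex_less p g f"
proof (cases "\<forall>t<p. f t = g t")
  case False
  define i where "i = (LEAST t. t < p \<and> f t \<noteq> g t)"
  have ex: "\<exists>t. t < p \<and> f t \<noteq> g t" using False by auto
  have i: "i < p" "f i \<noteq> g i" using LeastI_ex[OF ex] unfolding i_def by auto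
  have below: "\<forall>t<i. f t = g t"
  proof (intro allI impI)
    fix t assume "t < i"
    show "f t = g t"
    proof (rule ccontr)
      assume "f t \<noteq> g t"
      hence "i \<le> t" unfolding i_def using \<open>t < i\<close> i(1) by (intro Least_le) simp
      thus False using \<open>t < i\<close> by simp
    qed
  qed
  show ?thesis
  proof (cases "f i < g i")
    case True
    then show ?thesis unfolding lex_less_def using i below by blast
  next
    case False
    hence "g i < f i" using i(2) by simp
    then show ?thesis unfolding lex_less_def using i below by (metis (full_types))
  qed
qed simp

lemma ex_lex_max:
  assumes "finite S" "S \<noteq> {}" "\<forall>x\<in>S. \<forall>y\<in>S. (\<forall>t<p. h x t = h y t) \<longrightarrow> x = y"
  shows "\<exists>x\<in>S. \<forall>y\<in>S. y = x \<or> lex_less p (h y) (h x)"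
  using assms
proof (induction S rule: finite_ne_induct)
  case (singleton x)
  then show ?case by simp
next
  case (insert x F)
  have injF: "\<forall>x\<in>F. \<forall>y\<in>F. (\<forall>t<p. h x t = h y t) \<longrightarrow> x = y" using insert.prems by blast
  obtain m where m: "m \<in> F" "\<forall>y\<in>F. y = m \<or> lex_less p (h y) (h m)"
    using insert.IH[OF injF] by blast
  have tot: "(\<forall>t<p. h x t = h m t) \<or> lex_less p (h x) (h m) \<or> lex_less p (h m) (h x)"
    by (rule lex_less_total)
  show ?case
  proof (cases "lex_less p (h m) (h x)")
    case True
    have "\<forall>y\<in>insert x F. y = x \<or> lex_less p (h y) (h x)"
    proof
      fix y assume y: "y \<in> insert x F"
      show "y = x \<or> lex_less p (h y) (h x)"
      proof (cases "y = x")
        case False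
        hence "y \<in> F" using y by simp
        hence "y = m \<or> lex_less p (h y) (h m)" using m(2) by blast
        thus ?thesis using True lex_less_trans[of p "h y" "h m" "h x"] by auto
      qed simp
    qed
    then show ?thesis by blast
  next
    case False
    have xm: "(\<forall>t<p. h x t = h m t) \<longrightarrow> x = m" using insert.prems m(1) by blast
    have "x = m \<or> lex_less p (h x) (h m)"
      using tot False xm by blast
    hence "\<forall>y\<in>insert x F. y = m \<or> lex_less p (h y) (h m)" using m by blast
    then show ?thesis using m(1) by blast
  qed
qed

lemma partition_eqI:
  assumes "is_partition a" "is_partition b" "\<And>i. part a i = part b i"
  shows "a = b"
proof -
  have "i < length a \<longleftrightarrow> i < length b" for i
    using part_pos_iff[OF assms(1), of i] part_pos_iff[OF assms(2), of i] assms(3)[of i] by simp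
  hence len: "length a = length b" by (metis linorder_neq_iff order_less_irrefl)
  show ?thesis
  proof (rule nth_equalityI[OF len])
    fix i assume "i < length a"
    thus "a ! i = b ! i" using assms(3)[of i] len by (simp add: part_def)
  qed
qed

lemma part_filter_pos:
  "sorted_wrt (\<ge>) xs \<Longrightarrow> part (filter ((<) 0) xs) i = (if i < length xs then xs ! i else 0)"
proof (induction xs arbitrary: i)
  case Nil
  then show ?case by (simp add: part_def)
next
  case (Cons x xs)
  show ?case
  proof (cases "0 < x")
    case True
    show ?thesis
    proof (cases i)
      case 0
      then show ?thesis using True by (simp add: part_def)
    next
      case (Suc i')
      have "part (filter ((<) 0) (x # xs)) i = part (filter ((<) 0) xs) i'"
        using True Suc by (simp add: part_def)
      also have "\<dots> = (if i' < length xs then xs ! i' else 0)" using Cons by simp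
      finally show ?thesis using Suc by simp
    qed
  next
    case False
    hence z: "\<forall>y\<in>set (x # xs). y = 0" using Cons.prems by auto
    hence "filter ((<) 0) (x # xs) = []" by (simp add: filter_empty_conv)
    moreover have "i < length (x # xs) \<Longrightarrow> (x # xs) ! i = 0" using z nth_mem by blast
    ultimately show ?thesis by (simp add: part_def)
  qed
qed

lemma is_partition_filter_pos: "sorted_wrt (\<ge>) xs \<Longrightarrow> is_partition (filter ((<) 0) xs)"
  unfolding is_partition_def by (auto intro: sorted_wrt_filter)

lemma sum_list_filter_pos: "sum_list (filter ((<) (0::nat)) xs) = sum_list xs"
  by (induction xs) auto

lemma length_le_sum_list: "is_partition a \<Longrightarrow> length a \<le> sum_list a"
proof -
  assume "is_partition a"
  hence "\<forall>x\<in>set a. 1 \<le> x" by (auto simp: is_partition_def)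
  thus ?thesis by (induction a) auto
qed

lemma sum_list_eq_sum_part: "length a \<le> q \<Longrightarrow> sum_list a = (\<Sum>i<q. part a i)"
proof -
  assume "length a \<le> q"
  have "sum_list a = (\<Sum>i<length a. part a i)" by (simp add: sum_list_sum_nth atLeast0LessThan part_def)
  also have "\<dots> = (\<Sum>i<q. part a i)"
    by (rule sum.mono_neutral_left) (use \<open>length a \<le> q\<close> in \<open>auto simp: part_def\<close>)
  finally show ?thesis .
qed

lemma finite_partitions: "finite (partitions_of m)"
proof (rule finite_subset)
  show "partitions_of m \<subseteq> {xs. set xs \<subseteq> {..m} \<and> length xs \<le> m}"
  proof
    fix xs assume xs: "xs \<in> partitions_of m"
    hence p: "is_partition xs" "sum_list xs = m" by (auto simp: partitions_of_def)
    have "set xs \<subseteq> {..m}" using p(2) member_le_sum_list by fastforce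
    thus "xs \<in> {xs. set xs \<subseteq> {..m} \<and> length xs \<le> m}" using length_le_sum_list[OF p(1)] p(2) by simp
  qed
  show "finite {xs. set xs \<subseteq> {..m} \<and> length xs \<le> m}"
    by (rule finite_lists_length_le) simp
qed

section \<open>Unitriangularity of Kostka numbers\<close>

lemma SSYT_entry_ge_row:
  assumes T: "T \<in> SSYT n lam" and p: "is_partition lam"
  shows "(r, j) \<in> cells lam \<Longrightarrow> r \<le> T (r, j)"
proof (induction r)
  case 0
  then show ?case by simp
next
  case (Suc r)
  have c: "(r, j) \<in> cells lam" using cells_downward_closed[OF p Suc.prems, of r j] by simp
  have "T (r, j) < T (Suc r, j)" using SSYT_col_strict_mono[OF T p Suc.prems, of r] by simp
  thus ?case using Suc.IH[OF c] by simp
qed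

definition row_tableau :: "nat list \<Rightarrow> (nat \<times> nat \<Rightarrow> nat)" where
  "row_tableau lam = (\<lambda>(i, j). if (i, j) \<in> cells lam then i else 0)"

definition part_monomial :: "nat list \<Rightarrow> (nat \<Rightarrow>\<^sub>0 nat)" where
  "part_monomial lam = weight lam (row_tableau lam)"

lemma card_row: "card {c\<in>cells lam. fst c = t} = part lam t"
proof -
  have "{c\<in>cells lam. fst c = t} = (\<lambda>j. (t, j)) ` {..<part lam t}" by (auto simp: cells_eq_part)
  thus ?thesis by (simp add: card_image inj_on_def)
qed

lemma lookup_part_monomial: "Poly_Mapping.lookup (part_monomial lam) t = part lam t"
proof -
  have "{c\<in>cells lam. row_tableau lam c = t} = {c\<in>cells lam. fst c = t}" by (auto simp: row_tableau_def)
  thus ?thesis unfolding part_monomial_def lookup_weight using card_row by simp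
qed

lemma lookup_part_monomial_fun: "Poly_Mapping.lookup (part_monomial lam) = part lam"
  by (rule ext) (simp add: lookup_part_monomial)

lemma part_monomial_inj: "is_partition a \<Longrightarrow> is_partition b \<Longrightarrow> part_monomial a = part_monomial b \<Longrightarrow> a = b"
  by (rule partition_eqI) (auto simp: lookup_part_monomial dest: arg_cong[where f = "\<lambda>x. Poly_Mapping.lookup x _"])

lemma row_tableau_SSYT: assumes "is_partition lam" "length lam \<le> p" shows "row_tableau lam \<in> SSYT p lam"
  unfolding SSYT_def
proof (intro CollectI conjI allI impI ballI)
  fix c assume "c \<notin> cells lam" thus "row_tableau lam c = 0" by (cases c) (simp add: row_tableau_def)
next
  fix c assume c: "c \<in> cells lam"
  thus "row_tableau lam c < p" using assms by (cases c) (auto simp: row_tableau_def cells_def)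
next
  fix i j assume "(i, j) \<in> cells lam \<and> (i, Suc j) \<in> cells lam"
  thus "row_tableau lam (i, j) \<le> row_tableau lam (i, Suc j)" by (simp add: row_tableau_def)
next
  fix i j assume "(i, j) \<in> cells lam \<and> (Suc i, j) \<in> cells lam"
  thus "row_tableau lam (i, j) < row_tableau lam (Suc i, j)" by (simp add: row_tableau_def)
qed

lemma entries_eq_in_row:
  assumes T: "T \<in> SSYT n lam" and p: "is_partition lam"
    and below: "\<forall>r<i. \<forall>j. (r, j) \<in> cells lam \<longrightarrow> T (r, j) = r"
  shows "{c\<in>cells lam. T c = i} \<subseteq> {c\<in>cells lam. fst c = i}"
proof
  fix c assume c: "c \<in> {c\<in>cells lam. T c = i}"
  obtain r j where rj: "c = (r, j)" by (cases c)
  have "r \<le> i" using SSYT_entry_ge_row[OF T p, of r j] c rj by simp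
  moreover have "\<not> r < i" using below c rj by auto
  ultimately show "c \<in> {c\<in>cells lam. fst c = i}" using c rj by simp
qed

lemma SSYT_rows_eq_row_index:
  assumes T: "T \<in> SSYT n lam" and p: "is_partition lam"
  shows "(\<forall>t<i. Poly_Mapping.lookup (weight lam T) t = part lam t) \<Longrightarrow> \<forall>r<i. \<forall>j. (r, j) \<in> cells lam \<longrightarrow> T (r, j) = r"
proof (induction i)
  case 0
  then show ?case by simp
next
  case (Suc i)
  have IH: "\<forall>r<i. \<forall>j. (r, j) \<in> cells lam \<longrightarrow> T (r, j) = r" using Suc by simp
  have sub: "{c\<in>cells lam. T c = i} \<subseteq> {c\<in>cells lam. fst c = i}" by (rule entries_eq_in_row[OF T p IH])
  have "card {c\<in>cells lam. T c = i} = card {c\<in>cells lam. fst c = i}"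
    using Suc.prems[rule_format, of i] card_row[of lam i] by (simp add: lookup_weight)
  hence eq: "{c\<in>cells lam. T c = i} = {c\<in>cells lam. fst c = i}"
    by (intro card_subset_eq[OF _ sub]) simp
  show ?case
  proof (intro allI impI)
    fix r j assume r: "r < Suc i" "(r, j) \<in> cells lam"
    show "T (r, j) = r"
    proof (cases "r < i")
      case True
      then show ?thesis using IH r by simp
    next
      case False
      hence ri: "r = i" using r by simp
      have "(r, j) \<in> {c\<in>cells lam. fst c = i}" using r ri by simp
      hence "(r, j) \<in> {c\<in>cells lam. T c = i}" by (subst eq)
      thus ?thesis using ri by simp
    qed
  qed
qed

lemma weight_lex_le_part:
  assumes T: "T \<in> SSYT p lam" and pl: "is_partition lam"
  shows "(\<forall>t<p. Poly_Mapping.lookup (weight lam T) t = part lam t) \<or> lex_less p (Poly_Mapping.lookup (weight lam T)) (part lam)"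
proof (cases "\<forall>t<p. Poly_Mapping.lookup (weight lam T) t = part lam t")
  case False
  let ?w = "Poly_Mapping.lookup (weight lam T)"
  define i where "i = (LEAST t. t < p \<and> ?w t \<noteq> part lam t)"
  have ex: "\<exists>t. t < p \<and> ?w t \<noteq> part lam t" using False by auto
  have i: "i < p" "?w i \<noteq> part lam i" using LeastI_ex[OF ex] unfolding i_def by auto
  have bel: "\<forall>t<i. ?w t = part lam t"
  proof (intro allI impI)
    fix t assume "t < i"
    show "?w t = part lam t"
    proof (rule ccontr)
      assume "?w t \<noteq> part lam t"
      hence "i \<le> t" unfolding i_def using \<open>t < i\<close> i(1) by (intro Least_le) simp
      thus False using \<open>t < i\<close> by simp
    qed
  qed
  have "{c\<in>cells lam. T c = i} \<subseteq> {c\<in>cells lam. fst c = i}"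
    by (rule entries_eq_in_row[OF T pl SSYT_rows_eq_row_index[OF T pl bel]])
  hence "?w i \<le> part lam i" unfolding lookup_weight using card_row[of lam i]
    by (metis (no_types, lifting) card_mono finite_cells finite_subset mem_Collect_eq subsetI)
  hence "?w i < part lam i" using i(2) by simp
  thus ?thesis unfolding lex_less_def using i(1) bel by blast
qed simp

lemma SSYT_eq_row_tableau:
  assumes T: "T \<in> SSYT p lam" and pl: "is_partition lam"
    and e: "\<forall>t<p. Poly_Mapping.lookup (weight lam T) t = part lam t"
  shows "T = row_tableau lam"
proof
  fix c :: "nat \<times> nat"
  obtain r j where rj: "c = (r, j)" by (cases c)
  have rc: "\<forall>r<p. \<forall>j. (r, j) \<in> cells lam \<longrightarrow> T (r, j) = r" by (rule SSYT_rows_eq_row_index[OF T pl e])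
  show "T c = row_tableau lam c"
  proof (cases "(r, j) \<in> cells lam")
    case True
    have "r \<le> T (r, j)" by (rule SSYT_entry_ge_row[OF T pl True])
    moreover have "T (r, j) < p" by (rule SSYT_less[OF T True])
    ultimately have "r < p" by simp
    thus ?thesis using rc True rj by (simp add: row_tableau_def)
  next
    case False
    thus ?thesis using SSYT_zero[OF T False] rj by (simp add: row_tableau_def)
  qed
qed

lemma kostka_part_monomial: assumes "is_partition lam" "length lam \<le> p" shows "kostka p lam (part_monomial lam) = 1"
proof -
  have "{T\<in>SSYT p lam. weight lam T = part_monomial lam} = {row_tableau lam}"
  proof
    show "{T\<in>SSYT p lam. weight lam T = part_monomial lam} \<subseteq> {row_tableau lam}"
    proof
      fix T assume "T \<in> {T\<in>SSYT p lam. weight lam T = part_monomial lam}"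
      hence T: "T \<in> SSYT p lam" "weight lam T = part_monomial lam" by auto
      have "T = row_tableau lam" by (rule SSYT_eq_row_tableau[OF T(1) assms(1)]) (simp add: T(2) lookup_part_monomial)
      thus "T \<in> {row_tableau lam}" by simp
    qed
    show "{row_tableau lam} \<subseteq> {T\<in>SSYT p lam. weight lam T = part_monomial lam}"
      using row_tableau_SSYT[OF assms] by (simp add: part_monomial_def)
  qed
  thus ?thesis unfolding kostka_def by simp
qed

lemma kostka_nonzero_ex: "kostka p lam b \<noteq> 0 \<Longrightarrow> \<exists>T. T \<in> SSYT p lam \<and> weight lam T = b"
proof -
  assume "kostka p lam b \<noteq> 0"
  hence "{T\<in>SSYT p lam. weight lam T = b} \<noteq> {}" unfolding kostka_def by (intro notI) simp
  thus ?thesis by blast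
qed

lemma kostka_nonzero_lex_le:
  assumes "kostka p lam b \<noteq> 0" "is_partition lam"
  shows "b = part_monomial lam \<or> lex_less p (Poly_Mapping.lookup b) (part lam)"
proof -
  obtain T where T: "T \<in> SSYT p lam" "weight lam T = b" using kostka_nonzero_ex[OF assms(1)] by blast
  show ?thesis
  proof (cases "\<forall>t<p. Poly_Mapping.lookup (weight lam T) t = part lam t")
    case True
    hence "T = row_tableau lam" by (rule SSYT_eq_row_tableau[OF T(1) assms(2)])
    thus ?thesis using T(2) by (simp add: part_monomial_def)
  next
    case False
    hence "lex_less p (Poly_Mapping.lookup (weight lam T)) (part lam)" using weight_lex_le_part[OF T(1) assms(2)] by blast
    thus ?thesis using T(2) by simp
  qed
qed

lemma kostka_nonzero_length:
  assumes "kostka p lam b \<noteq> 0" "is_partition lam"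
  shows "length lam \<le> p"
proof (rule ccontr)
  assume "\<not> length lam \<le> p"
  hence "(p, 0) \<in> cells lam" using part_pos_iff[OF assms(2), of p] by (simp add: cells_eq_part)
  moreover obtain T where T: "T \<in> SSYT p lam" using kostka_nonzero_ex[OF assms(1)] by blast
  ultimately show False using SSYT_entry_ge_row[OF T assms(2), of p 0] SSYT_less[OF T, of "(p, 0)"] by simp
qed

lemma lookup_weight_beyond:
  assumes T: "T \<in> SSYT p lam"
  shows "p \<le> t \<Longrightarrow> Poly_Mapping.lookup (weight lam T) t = 0"
proof -
  assume "p \<le> t"
  hence "{c\<in>cells lam. T c = t} = {}" using SSYT_less[OF T] by fastforce
  thus ?thesis by (simp add: lookup_weight)
qed

lemma sum_lookup_weight:
  assumes T: "T \<in> SSYT p lam"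
  shows "(\<Sum>t<p. Poly_Mapping.lookup (weight lam T) t) = sum_list lam"
proof -
  have "cells lam = (\<Union>t\<in>{..<p}. {c\<in>cells lam. T c = t})" using SSYT_less[OF T] by auto
  moreover have "card (\<Union>t\<in>{..<p}. {c\<in>cells lam. T c = t}) = (\<Sum>t<p. card {c\<in>cells lam. T c = t})"
    by (rule card_UN_disjoint) auto
  ultimately have "card (cells lam) = (\<Sum>t<p. card {c\<in>cells lam. T c = t})" by simp
  thus ?thesis by (simp add: lookup_weight card_cells)
qed

definition monomials :: "nat \<Rightarrow> nat \<Rightarrow> (nat \<Rightarrow>\<^sub>0 nat) set" where
  "monomials p m = {b. (\<forall>t. p \<le> t \<longrightarrow> Poly_Mapping.lookup b t = 0) \<and> (\<Sum>t<p. Poly_Mapping.lookup b t) = m}"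

lemma monomials_eqI: "b \<in> monomials p m \<Longrightarrow> b' \<in> monomials p m' \<Longrightarrow> \<forall>t<p. Poly_Mapping.lookup b t = Poly_Mapping.lookup b' t \<Longrightarrow> b = b'"
  unfolding monomials_def by (rule poly_mapping_eqI) (metis (mono_tags, lifting) mem_Collect_eq not_le)

lemma finite_monomials: "finite (monomials p m)"
proof -
  let ?F = "{f. \<forall>x. (x \<in> {..<p} \<longrightarrow> f x \<in> {..m}) \<and> (x \<notin> {..<p} \<longrightarrow> f x = 0)}"
  have fin: "finite ?F" by (rule finite_set_of_finite_funs) auto
  have "Poly_Mapping.lookup ` monomials p m \<subseteq> ?F"
  proof
    fix f assume "f \<in> Poly_Mapping.lookup ` monomials p m"
    then obtain b where b: "b \<in> monomials p m" "f = Poly_Mapping.lookup b" by auto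
    have "Poly_Mapping.lookup b x \<le> m" if "x < p" for x
    proof -
      have "Poly_Mapping.lookup b x \<le> (\<Sum>t<p. Poly_Mapping.lookup b t)"
        by (rule member_le_sum) (use that in auto)
      thus ?thesis using b(1) by (simp add: monomials_def)
    qed
    thus "f \<in> ?F" using b by (auto simp: monomials_def)
  qed
  hence "finite (Poly_Mapping.lookup ` monomials p m)" using fin finite_subset by blast
  moreover have "inj_on Poly_Mapping.lookup (monomials p m)" by (rule inj_onI) (simp add: poly_mapping_eqI)
  ultimately show ?thesis using finite_imageD by blast
qed

lemma kostka_nonzero_monomials: "kostka p lam b \<noteq> 0 \<Longrightarrow> b \<in> monomials p (sum_list lam)"
proof -
  assume "kostka p lam b \<noteq> 0"
  then obtain T where T: "T \<in> SSYT p lam" "weight lam T = b" using kostka_nonzero_ex by blast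
  show ?thesis unfolding monomials_def using lookup_weight_beyond[OF T(1)] sum_lookup_weight[OF T(1)] T(2) by auto
qed

section \<open>Expansion in Kostka numbers\<close>

lemma sum_kostka_at_lex_max:
  assumes fin: "finite S" and parts: "\<forall>nu\<in>S. is_partition nu \<and> length nu \<le> p"
    and n0: "nu0 \<in> S" and mx: "\<forall>nu\<in>S. c nu \<noteq> 0 \<longrightarrow> nu = nu0 \<or> lex_less p (part nu) (part nu0)"
  shows "(\<Sum>nu\<in>S. c nu * int (kostka p nu (part_monomial nu0))) = c nu0"
proof -
  have "(\<Sum>nu\<in>S. c nu * int (kostka p nu (part_monomial nu0))) = c nu0 * int (kostka p nu0 (part_monomial nu0)) + (\<Sum>nu\<in>S - {nu0}. c nu * int (kostka p nu (part_monomial nu0)))"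
    using fin n0 by (simp add: sum.remove)
  also have "(\<Sum>nu\<in>S - {nu0}. c nu * int (kostka p nu (part_monomial nu0))) = 0"
  proof (rule sum.neutral, rule ballI)
    fix nu assume nu: "nu \<in> S - {nu0}"
    show "c nu * int (kostka p nu (part_monomial nu0)) = 0"
    proof (rule ccontr)
      assume "c nu * int (kostka p nu (part_monomial nu0)) \<noteq> 0"
      hence c: "c nu \<noteq> 0" and k: "kostka p nu (part_monomial nu0) \<noteq> 0" by auto
      have partition_nu: "is_partition nu" "is_partition nu0" using parts nu n0 by auto
      have l1: "lex_less p (part nu) (part nu0)" using mx nu c by auto
      from kostka_nonzero_lex_le[OF k partition_nu(1)] show False
      proof
        assume "part_monomial nu0 = part_monomial nu" thus False using part_monomial_inj[OF partition_nu(2) partition_nu(1)] nu by auto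
      next
        assume "lex_less p (Poly_Mapping.lookup (part_monomial nu0)) (part nu)"
        hence "lex_less p (part nu0) (part nu)" by (simp add: lookup_part_monomial_fun)
        thus False using l1 lex_less_asym by blast
      qed
    qed
  qed
  finally show ?thesis using kostka_part_monomial[of nu0 p] parts n0 by simp
qed

lemma kostka_expansion_leading_term:
  assumes fin: "finite S" and parts: "\<forall>nu\<in>S. is_partition nu"
    and nu: "nu \<in> S" "length nu \<le> p" "c nu \<noteq> 0"
  obtains nu0 where "c nu0 \<noteq> 0" "nu = nu0 \<or> lex_less p (part nu) (part nu0)"
    "(\<Sum>mu\<in>S. c mu * int (kostka p mu (part_monomial nu0))) = c nu0"
proof -
  let ?S' = "{nu\<in>S. length nu \<le> p}"
  let ?Z = "{nu\<in>?S'. c nu \<noteq> 0}"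
  have "\<forall>x\<in>?Z. \<forall>y\<in>?Z. (\<forall>t<p. part x t = part y t) \<longrightarrow> x = y"
  proof (intro ballI impI)
    fix x y assume x: "x \<in> ?Z" and y: "y \<in> ?Z" and e: "\<forall>t<p. part x t = part y t"
    have "part x t = part y t" for t
      using x y e by (cases "t < p") (auto simp: part_def)
    thus "x = y" using partition_eqI parts x y by blast
  qed
  moreover have "finite ?Z" "?Z \<noteq> {}" using fin nu by auto
  ultimately obtain nu0 where nu0: "nu0 \<in> ?Z" "\<forall>y\<in>?Z. y = nu0 \<or> lex_less p (part y) (part nu0)"
    using ex_lex_max by blast
  have "(\<Sum>mu\<in>S. c mu * int (kostka p mu (part_monomial nu0)))
      = (\<Sum>mu\<in>?S'. c mu * int (kostka p mu (part_monomial nu0)))"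
    by (rule sum.mono_neutral_right[OF fin]) (use kostka_nonzero_length parts in fastforce)+
  also have "\<dots> = c nu0"
    by (rule sum_kostka_at_lex_max) (use fin parts nu0 in auto)
  finally show ?thesis using that nu0 nu by blast
qed

lemma kostka_expansion_unique:
  assumes fin: "finite S" and parts: "\<forall>nu\<in>S. is_partition nu"
    and eq: "\<forall>b. (\<Sum>nu\<in>S. c nu * int (kostka p nu b)) = (\<Sum>nu\<in>S. c' nu * int (kostka p nu b))"
    and nu: "nu \<in> S" "length nu \<le> p"
  shows "c nu = c' nu"
proof (rule ccontr)
  assume "c nu \<noteq> c' nu"
  then obtain nu0 where "c nu0 - c' nu0 \<noteq> 0"
    "(\<Sum>mu\<in>S. (c mu - c' mu) * int (kostka p mu (part_monomial nu0))) = c nu0 - c' nu0"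
    using kostka_expansion_leading_term[OF fin parts nu, of "\<lambda>mu. c mu - c' mu"] by auto
  with eq show False by (simp add: left_diff_distrib sum_subtractf)
qed

lemma lex_less_swap_var:
  assumes "Suc t < p" "Poly_Mapping.lookup b t < Poly_Mapping.lookup b (Suc t)"
  shows "lex_less p (Poly_Mapping.lookup b) (Poly_Mapping.lookup (swap_var t b))"
  unfolding lex_less_def
  by (rule exI[of _ t]) (use assms in \<open>auto simp: lookup_swap_var swap_adj_def\<close>)

lemma lex_max_antimono:
  assumes max: "\<forall>y\<in>S. y = b \<or> lex_less p (Poly_Mapping.lookup y) (Poly_Mapping.lookup b)"
    and closed: "\<And>t. Suc t < p \<Longrightarrow> swap_var t b \<in> S"
    and "j < p" "i \<le> j"
  shows "Poly_Mapping.lookup b j \<le> Poly_Mapping.lookup b i"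
proof -
  have desc: "Poly_Mapping.lookup b (Suc t) \<le> Poly_Mapping.lookup b t" if "Suc t < p" for t
  proof (rule ccontr)
    assume "\<not> ?thesis"
    hence up: "lex_less p (Poly_Mapping.lookup b) (Poly_Mapping.lookup (swap_var t b))"
      using lex_less_swap_var[OF that] by simp
    hence "swap_var t b \<noteq> b" using lex_less_irrefl by metis
    with max closed[OF that] have "lex_less p (Poly_Mapping.lookup (swap_var t b)) (Poly_Mapping.lookup b)"
      by blast
    with up show False using lex_less_asym by blast
  qed
  show ?thesis
    using \<open>i \<le> j\<close> \<open>j < p\<close>
  proof (induction j rule: dec_induct)
    case (step j)
    then show ?case using desc[of j] by simp
  qed simp
qed

lemma antimono_monomial_eq_part_monomial:
  assumes b: "b \<in> monomials p m"
    and anti: "\<And>i j. j < p \<Longrightarrow> i \<le> j \<Longrightarrow> Poly_Mapping.lookup b j \<le> Poly_Mapping.lookup b i"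
  obtains nu where "nu \<in> partitions_of m" "length nu \<le> p" "part_monomial nu = b"
proof
  define xs where "xs = map (Poly_Mapping.lookup b) [0..<p]"
  define nu where "nu = filter ((<) 0) xs"
  have sorted: "sorted_wrt (\<ge>) xs"
    unfolding xs_def sorted_wrt_iff_nth_less using anti by simp
  have "part nu t = Poly_Mapping.lookup b t" for t
    using part_filter_pos[OF sorted, of t] b unfolding nu_def xs_def monomials_def by auto
  then show "part_monomial nu = b" by (intro poly_mapping_eqI) (simp add: lookup_part_monomial)
  have "sum_list nu = sum_list xs" by (simp add: nu_def sum_list_filter_pos)
  also have "\<dots> = (\<Sum>t<p. Poly_Mapping.lookup b t)"
    by (simp add: xs_def sum_list_sum_nth atLeast0LessThan)
  finally have "sum_list nu = m" using b by (simp add: monomials_def)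
  then show "nu \<in> partitions_of m"
    unfolding nu_def by (simp add: partitions_of_def is_partition_filter_pos[OF sorted])
  show "length nu \<le> p"
    unfolding nu_def xs_def using length_filter_le[of "(<) 0" "map (Poly_Mapping.lookup b) [0..<p]"] by simp
qed

lemma symmetric_lex_max_part_monomial:
  assumes supp: "\<forall>b. f b \<noteq> 0 \<longrightarrow> b \<in> monomials p m"
    and sym: "\<forall>k b. Suc k < p \<longrightarrow> f (swap_var k b) = f b"
    and "f b \<noteq> 0"
  obtains be nu where "f be \<noteq> 0" "\<forall>b. f b \<noteq> 0 \<longrightarrow> b = be \<or> lex_less p (Poly_Mapping.lookup b) (Poly_Mapping.lookup be)"
    "nu \<in> partitions_of m" "length nu \<le> p" "part_monomial nu = be"
proof -
  let ?S = "{b. f b \<noteq> 0}"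
  have sub: "?S \<subseteq> monomials p m" using supp by blast
  have "finite ?S" using finite_subset[OF sub finite_monomials] .
  moreover have "?S \<noteq> {}" using \<open>f b \<noteq> 0\<close> by blast
  moreover have "\<forall>x\<in>?S. \<forall>y\<in>?S. (\<forall>t<p. Poly_Mapping.lookup x t = Poly_Mapping.lookup y t) \<longrightarrow> x = y"
    using monomials_eqI sub by blast
  ultimately obtain be where be: "be \<in> ?S" "\<forall>y\<in>?S. y = be \<or> lex_less p (Poly_Mapping.lookup y) (Poly_Mapping.lookup be)"
    using ex_lex_max by blast
  have "swap_var t be \<in> ?S" if "Suc t < p" for t using sym be(1) that by simp
  then have "Poly_Mapping.lookup be j \<le> Poly_Mapping.lookup be i" if "j < p" "i \<le> j" for i j
    using lex_max_antimono[OF be(2)] that by blast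
  moreover have "be \<in> monomials p m" using supp be(1) by blast
  ultimately obtain nu where "nu \<in> partitions_of m" "length nu \<le> p" "part_monomial nu = be"
    using antimono_monomial_eq_part_monomial by blast
  moreover have "f be \<noteq> 0" "\<forall>b. f b \<noteq> 0 \<longrightarrow> b = be \<or> lex_less p (Poly_Mapping.lookup b) (Poly_Mapping.lookup be)"
    using be by auto
  ultimately show ?thesis using that by blast
qed

lemma sum_fun_upd_add_mult:
  assumes "finite A" "x \<in> A"
  shows "(\<Sum>a\<in>A. (d(x := d x + c)) a * h a) = (\<Sum>a\<in>A. d a * h a) + c * (h x :: 'a :: comm_semiring_1)"
proof -
  have "(\<Sum>a\<in>A. (d(x := d x + c)) a * h a) = (\<Sum>a\<in>A. d a * h a + (if a = x then c * h x else 0))"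
    by (rule sum.cong) (auto simp: distrib_right)
  also have "\<dots> = (\<Sum>a\<in>A. d a * h a) + c * h x"
    using assms by (simp add: sum.distrib)
  finally show ?thesis .
qed

definition lex_below_support :: "nat \<Rightarrow> nat \<Rightarrow> ((nat \<Rightarrow>\<^sub>0 nat) \<Rightarrow> int) \<Rightarrow> (nat \<Rightarrow>\<^sub>0 nat) set" where
  "lex_below_support p m f = {g\<in>monomials p m. \<exists>b. f b \<noteq> 0 \<and> (g = b \<or> lex_less p (Poly_Mapping.lookup g) (Poly_Mapping.lookup b))}"

lemma card_lex_below_support_subtract:
  assumes supp: "\<forall>b. f b \<noteq> 0 \<longrightarrow> b \<in> monomials p m"
    and fbe: "f be \<noteq> 0" and max: "\<forall>b. f b \<noteq> 0 \<longrightarrow> b = be \<or> lex_less p (Poly_Mapping.lookup b) (Poly_Mapping.lookup be)"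
    and nu: "is_partition nu" "length nu \<le> p" "part_monomial nu = be"
  shows "card (lex_below_support p m (\<lambda>b. f b - f be * int (kostka p nu b))) < card (lex_below_support p m f)"
proof -
  let ?g = "\<lambda>b. f b - f be * int (kostka p nu b)"
  have below_be: "lex_less p (Poly_Mapping.lookup b) (Poly_Mapping.lookup be)" if "?g b \<noteq> 0" for b
  proof -
    have "b \<noteq> be" using that kostka_part_monomial[OF nu(1,2)] nu(3) by auto
    show ?thesis
    proof (cases "f b = 0")
      case True
      then have "kostka p nu b \<noteq> 0" using that by auto
      from kostka_nonzero_lex_le[OF this nu(1)] show ?thesis
        using \<open>b \<noteq> be\<close> nu(3) by (auto simp: lookup_part_monomial_fun)
    qed (use max \<open>b \<noteq> be\<close> in blast)
  qed
  have "lex_below_support p m ?g \<subseteq> lex_below_support p m f - {be}"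
  proof
    fix ga assume "ga \<in> lex_below_support p m ?g"
    then obtain b where "?g b \<noteq> 0" "ga = b \<or> lex_less p (Poly_Mapping.lookup ga) (Poly_Mapping.lookup b)"
      and "ga \<in> monomials p m" unfolding lex_below_support_def by blast
    then have "lex_less p (Poly_Mapping.lookup ga) (Poly_Mapping.lookup be)"
      using below_be lex_less_trans by blast
    with \<open>ga \<in> monomials p m\<close> fbe show "ga \<in> lex_below_support p m f - {be}"
      unfolding lex_below_support_def using lex_less_irrefl by blast
  qed
  moreover have "finite (lex_below_support p m f)"
    unfolding lex_below_support_def using finite_monomials by simp
  moreover have "be \<in> lex_below_support p m f" unfolding lex_below_support_def using supp fbe by blast
  ultimately show ?thesis by (meson card_Diff1_less card_mono finite_Diff order_le_less_trans)
qed

lemma kostka_expansion_exists: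
  assumes "\<forall>b. f b \<noteq> 0 \<longrightarrow> b \<in> monomials p m"
    and "\<forall>k b. Suc k < p \<longrightarrow> f (swap_var k b) = f b"
  shows "\<exists>d. (\<forall>nu. d nu \<noteq> 0 \<longrightarrow> nu \<in> partitions_of m \<and> length nu \<le> p) \<and>
             (\<forall>b. f b = (\<Sum>nu\<in>partitions_of m. d nu * int (kostka p nu b)))"
  using assms
proof (induction "card (lex_below_support p m f)" arbitrary: f rule: less_induct)
  case less
  show ?case
  proof (cases "\<forall>b. f b = 0")
    case True
    then show ?thesis by (intro exI[of _ "\<lambda>_. 0"]) simp
  next
    case False
    then obtain be nu where fbe: "f be \<noteq> 0"
      and max: "\<forall>b. f b \<noteq> 0 \<longrightarrow> b = be \<or> lex_less p (Poly_Mapping.lookup b) (Poly_Mapping.lookup be)"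
      and nu: "nu \<in> partitions_of m" "length nu \<le> p" "part_monomial nu = be"
      using symmetric_lex_max_part_monomial[OF less.prems] by blast
    have part_nu: "is_partition nu" using nu(1) by (simp add: partitions_of_def)
    define g where "g b = f b - f be * int (kostka p nu b)" for b
    have "\<forall>b. g b \<noteq> 0 \<longrightarrow> b \<in> monomials p m"
    proof (intro allI impI)
      fix b assume "g b \<noteq> 0"
      then have "f b \<noteq> 0 \<or> kostka p nu b \<noteq> 0" by (auto simp: g_def)
      then show "b \<in> monomials p m"
        using less.prems(1) kostka_nonzero_monomials[of p nu b] nu(1) by (auto simp: partitions_of_def)
    qed
    moreover have "\<forall>k b. Suc k < p \<longrightarrow> g (swap_var k b) = g b"
      using less.prems(2) kostka_swap_var[OF part_nu] by (simp add: g_def)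
    moreover have "card (lex_below_support p m g) < card (lex_below_support p m f)"
      unfolding g_def by (rule card_lex_below_support_subtract[OF less.prems(1) fbe max part_nu nu(2,3)])
    ultimately obtain d where d: "\<forall>nu. d nu \<noteq> 0 \<longrightarrow> nu \<in> partitions_of m \<and> length nu \<le> p"
      "\<forall>b. g b = (\<Sum>nu\<in>partitions_of m. d nu * int (kostka p nu b))"
      using less.hyps by blast
    show ?thesis
    proof (intro exI conjI allI)
      show "(d(nu := d nu + f be)) mu \<noteq> 0 \<longrightarrow> mu \<in> partitions_of m \<and> length mu \<le> p" for mu
        using d(1) nu by auto
      fix b
      have "(\<Sum>mu\<in>partitions_of m. (d(nu := d nu + f be)) mu * int (kostka p mu b))
          = (\<Sum>mu\<in>partitions_of m. d mu * int (kostka p mu b)) + f be * int (kostka p nu b)"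
        by (rule sum_fun_upd_add_mult[OF finite_partitions nu(1)])
      also have "\<dots> = f b" using d(2)[rule_format, of b, symmetric] by (simp add: g_def)
      finally show "f b = (\<Sum>mu\<in>partitions_of m. (d(nu := d nu + f be)) mu * int (kostka p mu b))" ..
    qed
  qed
qed

section \<open>Restriction of variables\<close>

lemma SSYT_restrict:
  assumes T: "T \<in> SSYT q lam" and b: "\<forall>c\<in>cells lam. T c < p"
  shows "T \<in> SSYT p lam"
  unfolding SSYT_def
proof (intro CollectI conjI allI impI ballI)
  fix c assume "c \<notin> cells lam" thus "T c = 0" by (rule SSYT_zero[OF T])
next
  fix c assume "c \<in> cells lam" thus "T c < p" using b by blast
next
  fix i j assume "(i, j) \<in> cells lam \<and> (i, Suc j) \<in> cells lam"
  thus "T (i, j) \<le> T (i, Suc j)" using SSYT_row[OF T] by blast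
next
  fix i j assume "(i, j) \<in> cells lam \<and> (Suc i, j) \<in> cells lam"
  thus "T (i, j) < T (Suc i, j)" using SSYT_col[OF T] by blast
qed

lemma SSYT_mono: assumes "p \<le> q" "T \<in> SSYT p lam" shows "T \<in> SSYT q lam"
  by (rule SSYT_restrict[OF assms(2)]) (use SSYT_less[OF assms(2)] assms(1) in fastforce)

lemma lookup_weight_pos: "c \<in> cells lam \<Longrightarrow> 0 < Poly_Mapping.lookup (weight lam T) (T c)"
proof -
  assume c: "c \<in> cells lam"
  have "c \<in> {c'\<in>cells lam. T c' = T c}" using c by simp
  hence "{c'\<in>cells lam. T c' = T c} \<noteq> {}" by blast
  thus ?thesis by (simp add: lookup_weight card_gt_0_iff)
qed

lemma SSYT_restrict_weight:
  assumes T: "T \<in> SSYT q lam" and z: "\<forall>t. p \<le> t \<longrightarrow> Poly_Mapping.lookup (weight lam T) t = 0"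
  shows "T \<in> SSYT p lam"
proof (rule SSYT_restrict[OF T], rule ballI)
  fix c assume "c \<in> cells lam"
  hence "0 < Poly_Mapping.lookup (weight lam T) (T c)" by (rule lookup_weight_pos)
  show "T c < p"
  proof (rule ccontr)
    assume "\<not> T c < p"
    hence "Poly_Mapping.lookup (weight lam T) (T c) = 0" using z by simp
    thus False using \<open>0 < Poly_Mapping.lookup (weight lam T) (T c)\<close> by simp
  qed
qed

lemma kostka_restrict:
  assumes "p \<le> q" "\<forall>t. p \<le> t \<longrightarrow> Poly_Mapping.lookup b t = 0"
  shows "kostka q lam b = kostka p lam b"
proof -
  have "{T\<in>SSYT q lam. weight lam T = b} = {T\<in>SSYT p lam. weight lam T = b}"
    using SSYT_restrict_weight SSYT_mono[OF assms(1)] assms(2) by blast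
  thus ?thesis by (simp add: kostka_def)
qed

lemma tuple_weight_props:
  "Ts \<in> tableau_tuples p ls \<Longrightarrow> (\<forall>t. p \<le> t \<longrightarrow> Poly_Mapping.lookup (tuple_weight ls Ts) t = 0) \<and>
     (\<Sum>t<p. Poly_Mapping.lookup (tuple_weight ls Ts) t) = sum_list (map sum_list ls)"
proof (induction ls arbitrary: Ts)
  case Nil
  then show ?case by simp
next
  case (Cons l ls)
  from Cons.prems obtain T Ts' where Ts: "Ts = T # Ts'" and T: "T \<in> SSYT p l" and Ts': "Ts' \<in> tableau_tuples p ls"
    by auto
  note IH = Cons.IH[OF Ts']
  show ?case using IH lookup_weight_beyond[OF T] sum_lookup_weight[OF T] Ts by (simp add: lookup_add sum.distrib)
qed

lemma prod_coeff_nonzero_monomials: "prod_coeff p ls b \<noteq> 0 \<Longrightarrow> b \<in> monomials p (sum_list (map sum_list ls))"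
proof -
  assume "prod_coeff p ls b \<noteq> 0"
  hence "{Ts\<in>tableau_tuples p ls. tuple_weight ls Ts = b} \<noteq> {}" unfolding prod_coeff_def by (intro notI) simp
  then obtain Ts where Ts: "Ts \<in> tableau_tuples p ls" "tuple_weight ls Ts = b" by blast
  show ?thesis unfolding monomials_def using tuple_weight_props[OF Ts(1)] Ts(2) by auto
qed

lemma tableau_tuples_mono: "p \<le> q \<Longrightarrow> Ts \<in> tableau_tuples p ls \<Longrightarrow> Ts \<in> tableau_tuples q ls"
proof (induction ls arbitrary: Ts)
  case Nil
  then show ?case by simp
next
  case (Cons l ls)
  from Cons.prems obtain T Ts' where Ts: "Ts = T # Ts'" and T: "T \<in> SSYT p l" and Ts': "Ts' \<in> tableau_tuples p ls"
    by auto
  show ?case using SSYT_mono[OF Cons.prems(1) T] Cons.IH[OF Cons.prems(1) Ts'] Ts by auto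
qed

lemma tableau_tuples_restrict:
  "Ts \<in> tableau_tuples q ls \<Longrightarrow> \<forall>t. p \<le> t \<longrightarrow> Poly_Mapping.lookup (tuple_weight ls Ts) t = 0 \<Longrightarrow> Ts \<in> tableau_tuples p ls"
proof (induction ls arbitrary: Ts)
  case Nil
  then show ?case by simp
next
  case (Cons l ls)
  from Cons.prems(1) obtain T Ts' where Ts: "Ts = T # Ts'" and T: "T \<in> SSYT q l" and Ts': "Ts' \<in> tableau_tuples q ls"
    by auto
  have z1: "\<forall>t. p \<le> t \<longrightarrow> Poly_Mapping.lookup (weight l T) t = 0" using Cons.prems(2) Ts by (simp add: lookup_add)
  have z2: "\<forall>t. p \<le> t \<longrightarrow> Poly_Mapping.lookup (tuple_weight ls Ts') t = 0" using Cons.prems(2) Ts by (simp add: lookup_add)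
  show ?case using SSYT_restrict_weight[OF T z1] Cons.IH[OF Ts' z2] Ts by auto
qed

lemma prod_coeff_restrict:
  assumes "p \<le> q" "\<forall>t. p \<le> t \<longrightarrow> Poly_Mapping.lookup b t = 0"
  shows "prod_coeff q ls b = prod_coeff p ls b"
proof -
  have "{Ts\<in>tableau_tuples q ls. tuple_weight ls Ts = b} = {Ts\<in>tableau_tuples p ls. tuple_weight ls Ts = b}"
    using tableau_tuples_restrict tableau_tuples_mono[OF assms(1)] assms(2) by blast
  thus ?thesis by (simp add: prod_coeff_def)
qed

lemma lookup_sum_schur: "Poly_Mapping.lookup (\<Sum>nu\<in>A. of_int (d nu) * schur n nu) b = (\<Sum>nu\<in>A. d nu * int (kostka n nu b))"
  by (simp add: lookup_sum lookup_ofint_mult lookup_schur)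

lemma length_le_of_partitions_of: "mu \<in> partitions_of m \<Longrightarrow> length mu \<le> m"
  using length_le_sum_list by (auto simp: partitions_of_def)

lemma schur_expansion_unique:
  assumes eq: "(\<Sum>nu\<in>partitions_of m. of_int (d nu) * schur n nu) = (\<Sum>nu\<in>partitions_of m. of_int (d' nu) * schur n nu)"
    and mu: "mu \<in> partitions_of m" "length mu \<le> n"
  shows "d mu = d' mu"
proof (rule kostka_expansion_unique[OF finite_partitions _ _ mu])
  show "\<forall>nu\<in>partitions_of m. is_partition nu" by (simp add: partitions_of_def)
  show "\<forall>b. (\<Sum>nu\<in>partitions_of m. d nu * int (kostka n nu b)) = (\<Sum>nu\<in>partitions_of m. d' nu * int (kostka n nu b))"
    using arg_cong[OF eq, of "\<lambda>q. Poly_Mapping.lookup q _"] by (simp add: lookup_sum_schur)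
qed

lemma LR_coeff_eqI:
  assumes "prod_list (map (schur (sum_list (map sum_list ls))) ls)
     = (\<Sum>nu\<in>partitions_of (sum_list (map sum_list ls)). of_int (d nu) * schur (sum_list (map sum_list ls)) nu)"
  shows "LR_coeff ls mu = (if mu \<in> partitions_of (sum_list (map sum_list ls)) then d mu else 0)"
proof -
  let ?m = "sum_list (map sum_list ls)"
  show ?thesis
    unfolding LR_coeff_def Let_def
  proof (rule the_equality)
    fix c assume "\<exists>d'. prod_list (map (schur ?m) ls) = (\<Sum>nu\<in>partitions_of ?m. of_int (d' nu) * schur ?m nu)
      \<and> c = (if mu \<in> partitions_of ?m then d' mu else 0)"
    then obtain d' where d': "prod_list (map (schur ?m) ls) = (\<Sum>nu\<in>partitions_of ?m. of_int (d' nu) * schur ?m nu)"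
      and c: "c = (if mu \<in> partitions_of ?m then d' mu else 0)" by blast
    have "d' mu = d mu" if "mu \<in> partitions_of ?m"
      using schur_expansion_unique[OF _ that length_le_of_partitions_of[OF that]] d' assms by simp
    with c show "c = (if mu \<in> partitions_of ?m then d mu else 0)" by simp
  qed (use assms in blast)
qed

lemma LR_coeff_eq_kostka_expansion:
  assumes "\<forall>b. int (prod_coeff (sum_list (map sum_list ls)) ls b)
      = (\<Sum>nu\<in>partitions_of (sum_list (map sum_list ls)). d nu * int (kostka (sum_list (map sum_list ls)) nu b))"
    and "mu \<in> partitions_of (sum_list (map sum_list ls))"
  shows "LR_coeff ls mu = d mu"
proof -
  let ?m = "sum_list (map sum_list ls)"
  have "prod_list (map (schur ?m) ls) = (\<Sum>nu\<in>partitions_of ?m. of_int (d nu) * schur ?m nu)"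
    by (rule poly_mapping_eqI) (simp add: lookup_prod_schur lookup_sum_schur assms(1)[rule_format, symmetric])
  then show ?thesis using LR_coeff_eqI assms(2) by simp
qed

lemma kostka_expansions_agree:
  assumes d: "\<forall>b. int (prod_coeff q ls b) = (\<Sum>nu\<in>S. d nu * int (kostka q nu b))"
    and e: "\<forall>b. int (prod_coeff n ls b) = (\<Sum>nu\<in>S. e nu * int (kostka n nu b))"
  shows "(\<Sum>nu\<in>S. d nu * int (kostka (min n q) nu b)) = (\<Sum>nu\<in>S. e nu * int (kostka (min n q) nu b))"
proof (cases "\<forall>t. min n q \<le> t \<longrightarrow> Poly_Mapping.lookup b t = 0")
  case True
  have "kostka q nu b = kostka (min n q) nu b" "kostka n nu b = kostka (min n q) nu b" for nu
    using kostka_restrict True by simp_all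
  then have "(\<Sum>nu\<in>S. d nu * int (kostka (min n q) nu b)) = int (prod_coeff q ls b)"
    and "(\<Sum>nu\<in>S. e nu * int (kostka (min n q) nu b)) = int (prod_coeff n ls b)"
    using d e by simp_all
  moreover have "prod_coeff q ls b = prod_coeff n ls b"
    using prod_coeff_restrict[of "min n q" q b ls] prod_coeff_restrict[of "min n q" n b ls] True by simp
  ultimately show ?thesis by simp
next
  case False
  then obtain t where t: "min n q \<le> t" "Poly_Mapping.lookup b t \<noteq> 0" by auto
  have "kostka (min n q) nu b = 0" for nu
  proof (rule ccontr)
    assume "kostka (min n q) nu b \<noteq> 0"
    then have "b \<in> monomials (min n q) (sum_list nu)" by (rule kostka_nonzero_monomials)
    with t show False by (simp add: monomials_def)
  qed
  then show ?thesis by simp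
qed

lemma LR_coeff_eq_expansion:
  assumes parts: "\<forall>l\<in>set ls. is_partition l"
    and e: "\<forall>b. int (prod_coeff n ls b) = (\<Sum>nu\<in>partitions_of (sum_list (map sum_list ls)). e nu * int (kostka n nu b))"
    and mu: "mu \<in> partitions_of (sum_list (map sum_list ls))" "length mu \<le> n"
  shows "LR_coeff ls mu = e mu"
proof -
  let ?m = "sum_list (map sum_list ls)"
  obtain d where d: "\<forall>b. int (prod_coeff ?m ls b) = (\<Sum>nu\<in>partitions_of ?m. d nu * int (kostka ?m nu b))"
    using kostka_expansion_exists[of "\<lambda>b. int (prod_coeff ?m ls b)" ?m ?m]
      prod_coeff_nonzero_monomials prod_coeff_swap_var[OF parts] by auto
  have "d mu = e mu"
  proof (rule kostka_expansion_unique[OF finite_partitions _ _ mu(1)])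
    show "\<forall>nu\<in>partitions_of ?m. is_partition nu" by (simp add: partitions_of_def)
    show "\<forall>b. (\<Sum>nu\<in>partitions_of ?m. d nu * int (kostka (min n ?m) nu b))
        = (\<Sum>nu\<in>partitions_of ?m. e nu * int (kostka (min n ?m) nu b))"
      using kostka_expansions_agree[OF d e] by blast
    show "length mu \<le> min n ?m" using mu length_le_of_partitions_of by simp
  qed
  with LR_coeff_eq_kostka_expansion[OF d mu(1)] show ?thesis by simp
qed

section \<open>Complementary tableaux in a box\<close>

lemma card_reflect: "card {i. i < (N::nat) \<and> P (N - 1 - i)} = card {r. r < N \<and> P r}"
proof (rule bij_betw_same_card[of "\<lambda>i. N - 1 - i"])
  show "bij_betw (\<lambda>i. N - 1 - i) {i. i < N \<and> P (N - 1 - i)} {r. r < N \<and> P r}"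
  proof (rule bij_betwI')
    fix x y assume "x \<in> {i. i < N \<and> P (N - 1 - i)}" "y \<in> {i. i < N \<and> P (N - 1 - i)}"
    hence "x < N" "y < N" by auto
    thus "(N - 1 - x = N - 1 - y) = (x = y)" by arith
  next
    fix x assume "x \<in> {i. i < N \<and> P (N - 1 - i)}"
    thus "N - 1 - x \<in> {r. r < N \<and> P r}" by auto
  next
    fix y assume y: "y \<in> {r. r < N \<and> P r}"
    hence "N - 1 - y \<in> {i. i < N \<and> P (N - 1 - i)} \<and> y = N - 1 - (N - 1 - y)" by auto
    thus "\<exists>x\<in>{i. i < N \<and> P (N - 1 - i)}. y = N - 1 - x" by blast
  qed
qed

lemma card_split: "card {j. j < (a::nat) \<and> P j} + card {j. j < a \<and> \<not> P j} = a"
proof -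
  have "{j. j < a \<and> P j} \<union> {j. j < a \<and> \<not> P j} = {..<a}" by auto
  moreover have "{j. j < a \<and> P j} \<inter> {j. j < a \<and> \<not> P j} = {}" by auto
  moreover have "finite {j. j < a \<and> P j}" "finite {j. j < a \<and> \<not> P j}" by auto
  ultimately show ?thesis using card_Un_disjoint[of "{j. j < a \<and> P j}" "{j. j < a \<and> \<not> P j}"] by simp
qed

text \<open>Column j of the complementary tableau lists, in increasing order, the values below N missing
  from column a - 1 - j of T; together the two tableaux contain every value below N exactly a times.\<close>

definition compl_tableau :: "nat \<Rightarrow> nat \<Rightarrow> nat list \<Rightarrow> nat list \<Rightarrow> (nat \<times> nat \<Rightarrow> nat) \<Rightarrow> (nat \<times> nat \<Rightarrow> nat)" where
  "compl_tableau N a nu ka T = (\<lambda>(i, j). if (i, j) \<in> cells ka then nth_least ({..<N} - col_entries nu T (a - 1 - j)) i else 0)"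

definition const_weight :: "nat \<Rightarrow> nat \<Rightarrow> nat \<Rightarrow>\<^sub>0 nat" where
  "const_weight N a = (\<Sum>x<N. Poly_Mapping.single x a)"

lemma lookup_const_weight: "Poly_Mapping.lookup (const_weight N a) x = (if x < N then a else 0)"
  unfolding const_weight_def lookup_sum by (simp add: lookup_single when_def)

lemma const_weight_add: "const_weight N (a + b) = const_weight N a + const_weight N b"
  by (rule poly_mapping_eqI) (simp add: lookup_const_weight lookup_add)

lemma const_weight_0: "const_weight N 0 = 0"
  by (rule poly_mapping_eqI) (simp add: lookup_const_weight)

text \<open>ka is the complement of nu in the N \<times> a rectangle, rotated by a half turn.\<close>

locale box_compl_pair =
  fixes N a :: nat and nu ka :: "nat list"
  assumes partition_nu: "is_partition nu" and partition_ka: "is_partition ka"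
    and length_nu: "length nu \<le> N" and first_part_nu: "part nu 0 \<le> a"
    and part_ka: "\<And>i. part ka i = (if i < N then a - part nu (N - 1 - i) else 0)"
begin

lemma part_nu_le: "part nu i \<le> a"
  using part_antimono[OF partition_nu, of 0 i] first_part_nu by simp

lemma part_nu_beyond: "N \<le> i \<Longrightarrow> part nu i = 0"
  using length_nu unfolding part_def by simp

lemma part_ka_le: "part ka i \<le> a"
  using part_ka[of i] by simp

lemma length_ka: "length ka \<le> N"
proof (rule ccontr)
  assume "\<not> length ka \<le> N"
  hence "0 < part ka N" using part_pos_iff[OF partition_ka, of N] by simp
  thus False using part_ka[of N] by simp
qed

lemma sym: "box_compl_pair N a ka nu"
proof
  show "is_partition ka" by (rule partition_ka)
  show "is_partition nu" by (rule partition_nu)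
  show "length ka \<le> N" by (rule length_ka)
  show "part ka 0 \<le> a" by (rule part_ka_le)
  fix i
  show "part nu i = (if i < N then a - part ka (N - 1 - i) else 0)"
  proof (cases "i < N")
    case True
    have "part ka (N - 1 - i) = a - part nu i" using part_ka[of "N - 1 - i"] True by simp
    then show ?thesis using True part_nu_le[of i] by simp
  next
    case False
    then show ?thesis using part_nu_beyond[of i] by simp
  qed
qed

lemma col_len_nu_le: "col_len nu j \<le> N"
proof -
  have "{i. j < part nu i} \<subseteq> {..<N}"
  proof
    fix i assume "i \<in> {i. j < part nu i}"
    thus "i \<in> {..<N}" using part_nu_beyond[of i] by (cases "N \<le> i") auto
  qed
  thus ?thesis unfolding col_len_def using card_mono[of "{..<N}"] by simp
qed

lemma col_len_ka: assumes "j < a" shows "col_len ka j = N - col_len nu (a - 1 - j)"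
proof -
  have iff: "j < part ka i \<longleftrightarrow> i < N \<and> \<not> (a - 1 - j < part nu (N - 1 - i))" for i
  proof (cases "i < N")
    case True
    have "part ka i = a - part nu (N - 1 - i)" using part_ka[of i] True by simp
    moreover have "part nu (N - 1 - i) \<le> a" by (rule part_nu_le)
    ultimately show ?thesis using True assms by arith
  next
    case False
    then show ?thesis using part_ka[of i] by simp
  qed
  have e: "a - 1 - j < part nu r \<longleftrightarrow> r < col_len nu (a - 1 - j)" for r
    using part_gt_set_eq[OF partition_nu, of "a - 1 - j"] by (simp add: set_eq_iff)
  have s1: "{i. j < part ka i} = {i. i < N \<and> \<not> (a - 1 - j < part nu (N - 1 - i))}"
    using iff by blast
  have "col_len ka j = card {r. r < N \<and> \<not> (a - 1 - j < part nu r)}"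
    unfolding col_len_def s1 by (rule card_reflect)
  also have "{r. r < N \<and> \<not> (a - 1 - j < part nu r)} = {..<N} - {..<col_len nu (a - 1 - j)}"
    unfolding e by auto
  also have "card \<dots> = N - col_len nu (a - 1 - j)"
    using col_len_nu_le[of "a - 1 - j"] by simp
  finally show ?thesis .
qed

lemma col_len_nu_beyond: "a \<le> j \<Longrightarrow> col_len nu j = 0"
proof -
  assume "a \<le> j"
  have "\<not> j < part nu i" for i using part_nu_le[of i] \<open>a \<le> j\<close> by simp
  hence "{i. j < part nu i} = {}" by blast
  thus ?thesis unfolding col_len_def by simp
qed

lemma cells_nu_col_bound: "(i, j) \<in> cells nu \<Longrightarrow> j < a"
  unfolding cells_eq_part using part_nu_le[of i] by simp

lemma cells_ka_col_bound: "(i, j) \<in> cells ka \<Longrightarrow> j < a"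
  unfolding cells_eq_part using part_ka_le[of i] by simp

context
  fixes T assumes T: "T \<in> SSYT N nu"
begin

abbreviation "S j \<equiv> col_entries nu T j"

lemma S_subset: "S j \<subseteq> {..<N}" using col_entries_props(1)[OF T partition_nu] .
lemma finite_S: "finite (S j)" using col_entries_props(2)[OF T partition_nu] .
lemma card_S: "card (S j) = col_len nu j" using col_entries_props(3)[OF T partition_nu] .

lemma card_col_complement: "j < a \<Longrightarrow> card ({..<N} - S (a - 1 - j)) = col_len ka j"
  using col_len_ka[of j] S_subset[of "a - 1 - j"] card_S[of "a - 1 - j"]
  by (simp add: card_Diff_subset finite_S)

lemma compl_tableau_cell: "(i, j) \<in> cells ka \<Longrightarrow> compl_tableau N a nu ka T (i, j) = nth_least ({..<N} - S (a - 1 - j)) i"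
  unfolding compl_tableau_def by simp

lemma col_entries_compl_tableau: assumes "j < a" shows "col_entries ka (compl_tableau N a nu ka T) j = {..<N} - S (a - 1 - j)"
proof -
  let ?X = "{..<N} - S (a - 1 - j)"
  have "col_entries ka (compl_tableau N a nu ka T) j = (\<lambda>i. compl_tableau N a nu ka T (i, j)) ` {..<col_len ka j}"
    by (simp add: col_entries_def)
  also have "\<dots> = nth_least ?X ` {..<col_len ka j}"
  proof (rule image_cong[OF refl])
    fix i assume "i \<in> {..<col_len ka j}"
    hence "(i, j) \<in> cells ka" using cells_iff_col_len[OF partition_ka] by simp
    thus "compl_tableau N a nu ka T (i, j) = nth_least ?X i" by (rule compl_tableau_cell)
  qed
  also have "\<dots> = ?X" using nth_least_image[of ?X] card_col_complement[OF assms] by simp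
  finally show ?thesis .
qed

lemma col_entries_compl_tableau_beyond: assumes "a \<le> j" shows "col_entries ka (compl_tableau N a nu ka T) j = {}"
proof -
  have "col_len ka j = 0"
  proof -
    have "\<not> j < part ka i" for i using part_ka_le[of i] assms by simp
    hence "{i. j < part ka i} = {}" by blast
    thus ?thesis unfolding col_len_def by simp
  qed
  thus ?thesis by (simp add: col_entries_def)
qed

lemma compl_tableau_row_mono:
  assumes "(i, j) \<in> cells ka" "(i, Suc j) \<in> cells ka"
  shows "compl_tableau N a nu ka T (i, j) \<le> compl_tableau N a nu ka T (i, Suc j)"
proof -
  have ja: "Suc j < a" using cells_ka_col_bound assms(2) by blast
  define c where "c = a - 2 - j"
  have c1: "a - 1 - j = Suc c" and c2: "a - 1 - Suc j = c" using ja c_def by auto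
  have "nth_least ({..<N} - S (Suc c)) i \<le> nth_least ({..<N} - S c) i"
  proof (rule nth_least_Diff_le)
    show "\<forall>r<card (S (Suc c)). nth_least (S c) r \<le> nth_least (S (Suc c)) r"
    proof (intro allI impI)
      fix r assume "r < card (S (Suc c))"
      hence r1: "r < col_len nu (Suc c)" using card_S by simp
      hence r0: "r < col_len nu c" using col_len_antimono[OF partition_nu, of c "Suc c"] by simp
      have "T (r, c) \<le> T (r, Suc c)"
        using SSYT_row[OF T] cells_iff_col_len[OF partition_nu] r0 r1 by blast
      thus "nth_least (S c) r \<le> nth_least (S (Suc c)) r"
        using col_entries_props(4)[OF T partition_nu r0] col_entries_props(4)[OF T partition_nu r1] by simp
    qed
    show "card (S (Suc c)) \<le> card (S c)" using card_S col_len_antimono[OF partition_nu, of c "Suc c"] by simp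
    show "i < card ({..<N} - S c)"
      using card_col_complement[OF ja] c2 cells_iff_col_len[OF partition_ka] assms(2) by simp
  qed (use S_subset in auto)
  thus ?thesis using compl_tableau_cell[of i j] compl_tableau_cell[of i "Suc j"] assms c1 c2 by simp
qed

lemma compl_tableau_SSYT: "compl_tableau N a nu ka T \<in> SSYT N ka"
  unfolding SSYT_def
proof (intro CollectI conjI allI impI ballI)
  let ?C = "compl_tableau N a nu ka T"
  fix c assume "c \<notin> cells ka"
  thus "?C c = 0" unfolding compl_tableau_def by (cases c) simp
next
  let ?C = "compl_tableau N a nu ka T"
  fix c assume c: "c \<in> cells ka"
  obtain i j where ij: "c = (i, j)" by (cases c)
  have ja: "j < a" using cells_ka_col_bound c ij by simp
  have "i < card ({..<N} - S (a - 1 - j))" using card_col_complement[OF ja] cells_iff_col_len[OF partition_ka] c ij by simp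
  hence "nth_least ({..<N} - S (a - 1 - j)) i \<in> {..<N} - S (a - 1 - j)"
    by (intro nth_least_in) auto
  thus "?C c < N" using compl_tableau_cell c ij by simp
next
  fix i j assume "(i, j) \<in> cells ka \<and> (i, Suc j) \<in> cells ka"
  then show "compl_tableau N a nu ka T (i, j) \<le> compl_tableau N a nu ka T (i, Suc j)"
    by (intro compl_tableau_row_mono) auto
next
  let ?C = "compl_tableau N a nu ka T"
  fix i j assume h: "(i, j) \<in> cells ka \<and> (Suc i, j) \<in> cells ka"
  have ja: "j < a" using cells_ka_col_bound[of i j] h by simp
  have "Suc i < card ({..<N} - S (a - 1 - j))" using card_col_complement[OF ja] cells_iff_col_len[OF partition_ka] h by simp
  hence "nth_least ({..<N} - S (a - 1 - j)) i < nth_least ({..<N} - S (a - 1 - j)) (Suc i)"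
    by (intro nth_least_strict_mono) auto
  thus "?C (i, j) < ?C (Suc i, j)" using compl_tableau_cell h by simp
qed

lemma compl_tableau_involution: "compl_tableau N a ka nu (compl_tableau N a nu ka T) = T"
proof
  fix c :: "nat \<times> nat"
  obtain i j where ij: "c = (i, j)" by (cases c)
  show "compl_tableau N a ka nu (compl_tableau N a nu ka T) c = T c"
  proof (cases "(i, j) \<in> cells nu")
    case True
    have ja: "j < a" using cells_nu_col_bound True by simp
    have ja': "a - 1 - j < a" using ja by simp
    have "compl_tableau N a ka nu (compl_tableau N a nu ka T) (i, j) = nth_least ({..<N} - col_entries ka (compl_tableau N a nu ka T) (a - 1 - j)) i"
      unfolding compl_tableau_def using True by simp
    also have "col_entries ka (compl_tableau N a nu ka T) (a - 1 - j) = {..<N} - S j"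
      using col_entries_compl_tableau[OF ja'] ja by simp
    also have "{..<N} - ({..<N} - S j) = S j" using S_subset[of j] by auto
    also have "nth_least (S j) i = T (i, j)"
      using col_entries_props(4)[OF T partition_nu] cells_iff_col_len[OF partition_nu] True by simp
    finally show ?thesis using ij by simp
  next
    case False
    then show ?thesis unfolding compl_tableau_def using ij SSYT_zero[OF T False] by simp
  qed
qed

lemma weight_add_compl_tableau: "weight nu T + weight ka (compl_tableau N a nu ka T) = const_weight N a"
proof (rule poly_mapping_eqI)
  fix x
  have T': "compl_tableau N a nu ka T \<in> SSYT N ka" by (rule compl_tableau_SSYT)
  have e1: "{j. x \<in> S j} = {j. j < a \<and> x \<in> S j}"
  proof -
    have "x \<in> S j \<Longrightarrow> j < a" for j
      using col_len_nu_beyond[of j] by (cases "a \<le> j") (auto simp: col_entries_def)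
    thus ?thesis by blast
  qed
  have e2: "{j. x \<in> col_entries ka (compl_tableau N a nu ka T) j} = {j. j < a \<and> x \<in> {..<N} - S (a - 1 - j)}"
  proof -
    have "x \<in> col_entries ka (compl_tableau N a nu ka T) j \<longleftrightarrow> j < a \<and> x \<in> {..<N} - S (a - 1 - j)" for j
      using col_entries_compl_tableau[of j] col_entries_compl_tableau_beyond[of j] by (cases "j < a") auto
    thus ?thesis by blast
  qed
  have "Poly_Mapping.lookup (weight nu T) x + Poly_Mapping.lookup (weight ka (compl_tableau N a nu ka T)) x
      = card {j. j < a \<and> x \<in> S j} + card {j. j < a \<and> x \<in> {..<N} - S (a - 1 - j)}"
    unfolding lookup_weight card_entries_eq_card_cols[OF T partition_nu] card_entries_eq_card_cols[OF T' partition_ka] e1 e2 ..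
  also have "\<dots> = (if x < N then a else 0)"
  proof (cases "x < N")
    case True
    have "card {j. j < a \<and> x \<in> {..<N} - S (a - 1 - j)} = card {j. j < a \<and> x \<notin> S j}"
      using True card_reflect[of a "\<lambda>j. x \<notin> S j"] by simp
    then show ?thesis using True card_split[of a "\<lambda>j. x \<in> S j"] by simp
  next
    case False
    have "x \<notin> S j" for j using S_subset[of j] False by auto
    then show ?thesis using False by simp
  qed
  finally show "Poly_Mapping.lookup (weight nu T + weight ka (compl_tableau N a nu ka T)) x = Poly_Mapping.lookup (const_weight N a) x"
    by (simp add: lookup_add lookup_const_weight)
qed

end

end

lemma kostka_box_compl:
  assumes "box_compl_pair N a nu ka"
  shows "kostka N ka g = card {T\<in>SSYT N nu. weight nu T + g = const_weight N a}"
proof -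
  interpret A: box_compl_pair N a nu ka by (rule assms)
  interpret B: box_compl_pair N a ka nu by (rule A.sym)
  let ?A = "{T\<in>SSYT N nu. weight nu T + g = const_weight N a}" and ?B = "{T\<in>SSYT N ka. weight ka T = g}"
  have "bij_betw (compl_tableau N a nu ka) ?A ?B"
  proof (rule bij_betw_byWitness[where f' = "compl_tableau N a ka nu"])
    show "compl_tableau N a nu ka ` ?A \<subseteq> ?B"
    proof
      fix T' assume "T' \<in> compl_tableau N a nu ka ` ?A"
      then obtain T where T: "T \<in> SSYT N nu" and e: "weight nu T + g = const_weight N a" and T': "T' = compl_tableau N a nu ka T" by auto
      have "weight nu T + weight ka (compl_tableau N a nu ka T) = weight nu T + g" using A.weight_add_compl_tableau[OF T] e by simp
      hence "weight ka (compl_tableau N a nu ka T) = g" by simp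
      thus "T' \<in> ?B" using A.compl_tableau_SSYT[OF T] T' by simp
    qed
    show "compl_tableau N a ka nu ` ?B \<subseteq> ?A"
    proof
      fix T' assume "T' \<in> compl_tableau N a ka nu ` ?B"
      then obtain T where T: "T \<in> SSYT N ka" and e: "weight ka T = g" and T': "T' = compl_tableau N a ka nu T" by auto
      have "weight ka T + weight nu (compl_tableau N a ka nu T) = const_weight N a" by (rule B.weight_add_compl_tableau[OF T])
      hence "weight nu (compl_tableau N a ka nu T) + g = const_weight N a" using e by (simp add: add.commute)
      thus "T' \<in> ?A" using B.compl_tableau_SSYT[OF T] T' by simp
    qed
    show "\<forall>T\<in>?A. compl_tableau N a ka nu (compl_tableau N a nu ka T) = T" using A.compl_tableau_involution by simp
    show "\<forall>T\<in>?B. compl_tableau N a nu ka (compl_tableau N a ka nu T) = T" using B.compl_tableau_involution by simp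
  qed
  thus ?thesis unfolding kostka_def by (simp add: bij_betw_same_card)
qed

lemma kostka_box_compl_eq:
  assumes "box_compl_pair N a nu ka" "b + g = const_weight N a"
  shows "kostka N ka g = kostka N nu b"
  using kostka_box_compl[OF assms(1), of g] by (simp add: kostka_def flip: assms(2))

lemma kostka_box_compl_eq_0:
  assumes "box_compl_pair N a nu ka" "\<forall>b. b + g \<noteq> const_weight N a"
  shows "kostka N ka g = 0"
  using kostka_box_compl[OF assms(1), of g] assms(2) by simp

fun compl_tuple :: "nat \<Rightarrow> nat \<Rightarrow> nat list list \<Rightarrow> nat list list \<Rightarrow> (nat \<times> nat \<Rightarrow> nat) list \<Rightarrow> (nat \<times> nat \<Rightarrow> nat) list" where
  "compl_tuple N a (l#ls) (k#ks) (T#Ts) = compl_tableau N a l k T # compl_tuple N a ls ks Ts"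
| "compl_tuple N a _ _ _ = []"

lemma compl_tuple_props:
  assumes "list_all2 (box_compl_pair N a) ls ks"
  shows "Ts \<in> tableau_tuples N ls \<Longrightarrow> compl_tuple N a ls ks Ts \<in> tableau_tuples N ks
     \<and> tuple_weight ls Ts + tuple_weight ks (compl_tuple N a ls ks Ts) = const_weight N (a * length ls)
     \<and> compl_tuple N a ks ls (compl_tuple N a ls ks Ts) = Ts"
  using assms
proof (induction arbitrary: Ts rule: list_all2_induct)
  case Nil
  then show ?case by (simp add: const_weight_0)
next
  case (Cons l ls k ks)
  from Cons.prems obtain T Ts' where Ts: "Ts = T # Ts'" and T: "T \<in> SSYT N l" and Ts': "Ts' \<in> tableau_tuples N ls"
    by auto
  have IH: "compl_tuple N a ls ks Ts' \<in> tableau_tuples N ks \<and> tuple_weight ls Ts' + tuple_weight ks (compl_tuple N a ls ks Ts') = const_weight N (a * length ls)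
     \<and> compl_tuple N a ks ls (compl_tuple N a ls ks Ts') = Ts'" by (rule Cons.IH[OF Ts'])
  have c1: "compl_tableau N a l k T \<in> SSYT N k" by (rule box_compl_pair.compl_tableau_SSYT[OF Cons.hyps(1) T])
  have c2: "weight l T + weight k (compl_tableau N a l k T) = const_weight N a" by (rule box_compl_pair.weight_add_compl_tableau[OF Cons.hyps(1) T])
  have c3: "compl_tableau N a k l (compl_tableau N a l k T) = T" by (rule box_compl_pair.compl_tableau_involution[OF Cons.hyps(1) T])
  have "tuple_weight (l # ls) Ts + tuple_weight (k # ks) (compl_tuple N a (l # ls) (k # ks) Ts)
      = (weight l T + weight k (compl_tableau N a l k T)) + (tuple_weight ls Ts' + tuple_weight ks (compl_tuple N a ls ks Ts'))"
    using Ts by (simp add: ac_simps)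
  also have "\<dots> = const_weight N (a * length (l # ls))" using c2 IH by (simp add: const_weight_add)
  finally show ?case using Ts c1 c3 IH by auto
qed

lemma list_all2_box_compl_pair_sym: "list_all2 (box_compl_pair N a) ls ks \<Longrightarrow> list_all2 (box_compl_pair N a) ks ls"
  by (induction rule: list_all2_induct) (auto intro: box_compl_pair.sym)

lemma prod_coeff_box_compl:
  assumes "list_all2 (box_compl_pair N a) ls ks"
  shows "prod_coeff N ks g = card {Ts\<in>tableau_tuples N ls. tuple_weight ls Ts + g = const_weight N (a * length ls)}"
proof -
  have la: "length ks = length ls" using assms by (simp add: list_all2_lengthD)
  have assms': "list_all2 (box_compl_pair N a) ks ls" by (rule list_all2_box_compl_pair_sym[OF assms])
  let ?A = "{Ts\<in>tableau_tuples N ls. tuple_weight ls Ts + g = const_weight N (a * length ls)}" and ?B = "{Ts\<in>tableau_tuples N ks. tuple_weight ks Ts = g}"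
  have "bij_betw (compl_tuple N a ls ks) ?A ?B"
  proof (rule bij_betw_byWitness[where f' = "compl_tuple N a ks ls"])
    show "compl_tuple N a ls ks ` ?A \<subseteq> ?B"
    proof
      fix T' assume "T' \<in> compl_tuple N a ls ks ` ?A"
      then obtain Ts where T: "Ts \<in> tableau_tuples N ls" and e: "tuple_weight ls Ts + g = const_weight N (a * length ls)" and T': "T' = compl_tuple N a ls ks Ts" by auto
      note P = compl_tuple_props[OF assms T]
      have "tuple_weight ls Ts + tuple_weight ks (compl_tuple N a ls ks Ts) = tuple_weight ls Ts + g" using P e by simp
      hence "tuple_weight ks (compl_tuple N a ls ks Ts) = g" by simp
      thus "T' \<in> ?B" using P T' by simp
    qed
    show "compl_tuple N a ks ls ` ?B \<subseteq> ?A"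
    proof
      fix T' assume "T' \<in> compl_tuple N a ks ls ` ?B"
      then obtain Ts where T: "Ts \<in> tableau_tuples N ks" and e: "tuple_weight ks Ts = g" and T': "T' = compl_tuple N a ks ls Ts" by auto
      note P = compl_tuple_props[OF assms' T]
      have "tuple_weight ls (compl_tuple N a ks ls Ts) + g = const_weight N (a * length ls)" using P e la by (simp add: add.commute)
      thus "T' \<in> ?A" using P T' by simp
    qed
    show "\<forall>T\<in>?A. compl_tuple N a ks ls (compl_tuple N a ls ks T) = T" using compl_tuple_props[OF assms] by simp
    show "\<forall>T\<in>?B. compl_tuple N a ls ks (compl_tuple N a ks ls T) = T" using compl_tuple_props[OF assms'] by simp
  qed
  thus ?thesis unfolding prod_coeff_def by (simp add: bij_betw_same_card)
qed

lemma prod_coeff_box_compl_eq: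
  assumes "list_all2 (box_compl_pair N a) ls ks" "b + g = const_weight N (a * length ls)"
  shows "prod_coeff N ks g = prod_coeff N ls b"
  using prod_coeff_box_compl[OF assms(1), of g] by (simp add: prod_coeff_def flip: assms(2))

lemma prod_coeff_box_compl_eq_0:
  assumes "list_all2 (box_compl_pair N a) ls ks" "\<forall>b. b + g \<noteq> const_weight N (a * length ls)"
  shows "prod_coeff N ks g = 0"
  using prod_coeff_box_compl[OF assms(1), of g] assms(2) by simp

definition box_compl :: "nat \<Rightarrow> nat \<Rightarrow> nat list \<Rightarrow> nat list" where
  "box_compl a N nu = filter ((<) 0) (map (\<lambda>i. a - part nu (N - 1 - i)) [0..<N])"

definition box :: "nat \<Rightarrow> nat \<Rightarrow> nat list set" where
  "box a N = {nu. is_partition nu \<and> length nu \<le> N \<and> part nu 0 \<le> a}"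

context
  fixes a N :: nat and nu :: "nat list"
  assumes nb: "nu \<in> box a N"
begin

lemma box_partition: "is_partition nu" and box_length: "length nu \<le> N" and box_first_part: "part nu 0 \<le> a"
  using nb by (auto simp: box_def)

lemma box_compl_sorted: "sorted_wrt (\<ge>) (map (\<lambda>i. a - part nu (N - 1 - i)) [0..<N])"
proof -
  have key: "a - part nu (N - 1 - j) \<le> a - part nu (N - 1 - i)" if ij: "i < j" "j < N" for i j
  proof -
    have "part nu (N - 1 - i) \<le> part nu (N - 1 - j)" using part_antimono[OF box_partition, of "N - 1 - j" "N - 1 - i"] ij by simp
    thus ?thesis by simp
  qed
  show ?thesis unfolding sorted_wrt_iff_nth_less using key by simp
qed

lemma part_box_compl: "part (box_compl a N nu) i = (if i < N then a - part nu (N - 1 - i) else 0)"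
  unfolding box_compl_def using part_filter_pos[OF box_compl_sorted, of i] by simp

lemma box_compl_pair_box_compl: "box_compl_pair N a nu (box_compl a N nu)"
proof
  show "is_partition nu" by (rule box_partition)
  show "is_partition (box_compl a N nu)" unfolding box_compl_def by (rule is_partition_filter_pos[OF box_compl_sorted])
  show "length nu \<le> N" by (rule box_length)
  show "part nu 0 \<le> a" by (rule box_first_part)
  fix i show "part (box_compl a N nu) i = (if i < N then a - part nu (N - 1 - i) else 0)" by (rule part_box_compl)
qed

lemma box_compl_in_box: "box_compl a N nu \<in> box a N"
proof -
  interpret box_compl_pair N a nu "box_compl a N nu" by (rule box_compl_pair_box_compl)
  show ?thesis unfolding box_def using partition_ka length_ka part_ka_le by simp
qed

lemma part_le_box: "part nu i \<le> a"
  using part_antimono[OF box_partition, of 0 i] box_first_part by simp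

lemma sum_list_le_box: "sum_list nu \<le> N * a"
proof -
  have "sum_list nu = (\<Sum>i<N. part nu i)" by (rule sum_list_eq_sum_part[OF box_length])
  also have "\<dots> \<le> (\<Sum>i<N. a)" by (rule sum_mono) (rule part_le_box)
  finally show ?thesis by simp
qed

lemma sum_list_box_compl: "sum_list (box_compl a N nu) = N * a - sum_list nu"
proof -
  have "sum_list (box_compl a N nu) = (\<Sum>i<N. a - part nu (N - 1 - i))"
    by (simp add: box_compl_def sum_list_filter_pos flip: sum_set_upt_conv_sum_list_nat atLeast0LessThan)
  also have "\<dots> = (\<Sum>i<N. a - part nu i)"
    using sum.nat_diff_reindex[of "\<lambda>i. a - part nu i" N] by simp
  also have "\<dots> = (\<Sum>i<N. a) - (\<Sum>i<N. part nu i)"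
    by (rule sum_subtractf_nat) (rule part_le_box)
  also have "(\<Sum>i<N. part nu i) = sum_list nu" using sum_list_eq_sum_part[OF box_length] by simp
  finally show ?thesis by simp
qed

end

lemma box_compl_box_compl: assumes nb: "nu \<in> box a N" shows "box_compl a N (box_compl a N nu) = nu"
proof -
  interpret A: box_compl_pair N a nu "box_compl a N nu" by (rule box_compl_pair_box_compl[OF nb])
  interpret B: box_compl_pair N a "box_compl a N nu" nu by (rule A.sym)
  have cb: "box_compl a N nu \<in> box a N" by (rule box_compl_in_box[OF nb])
  show ?thesis
  proof (rule partition_eqI)
    show "is_partition (box_compl a N (box_compl a N nu))" using box_compl_in_box[OF cb] by (simp add: box_def)
    show "is_partition nu" using nb by (simp add: box_def)
    fix i
    show "part (box_compl a N (box_compl a N nu)) i = part nu i"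
      using part_box_compl[OF cb] B.part_ka[of i] by simp
  qed
qed

lemma bij_betw_box_compl:
  assumes "m \<le> N * a"
  shows "bij_betw (box_compl a N) (partitions_of m \<inter> box a N) (partitions_of (N * a - m) \<inter> box a N)"
proof (rule bij_betw_byWitness[where f' = "box_compl a N"])
  show "\<forall>x\<in>partitions_of m \<inter> box a N. box_compl a N (box_compl a N x) = x" using box_compl_box_compl by blast
  show "\<forall>x\<in>partitions_of (N * a - m) \<inter> box a N. box_compl a N (box_compl a N x) = x" using box_compl_box_compl by blast
  show "box_compl a N ` (partitions_of m \<inter> box a N) \<subseteq> partitions_of (N * a - m) \<inter> box a N"
  proof
    fix y assume "y \<in> box_compl a N ` (partitions_of m \<inter> box a N)"
    then obtain x where x: "x \<in> partitions_of m" "x \<in> box a N" "y = box_compl a N x" by auto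
    have "y \<in> box a N" using box_compl_in_box[OF x(2)] x(3) by simp
    moreover have "sum_list y = N * a - m" using sum_list_box_compl[OF x(2)] x by (simp add: partitions_of_def)
    ultimately show "y \<in> partitions_of (N * a - m) \<inter> box a N" by (simp add: partitions_of_def box_def)
  qed
  show "box_compl a N ` (partitions_of (N * a - m) \<inter> box a N) \<subseteq> partitions_of m \<inter> box a N"
  proof
    fix y assume "y \<in> box_compl a N ` (partitions_of (N * a - m) \<inter> box a N)"
    then obtain x where x: "x \<in> partitions_of (N * a - m)" "x \<in> box a N" "y = box_compl a N x" by auto
    have "y \<in> box a N" using box_compl_in_box[OF x(2)] x(3) by simp
    moreover have "sum_list y = m" using sum_list_box_compl[OF x(2)] x assms by (simp add: partitions_of_def)
    ultimately show "y \<in> partitions_of m \<inter> box a N" by (simp add: partitions_of_def box_def)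
  qed
qed

section \<open>Duality of the expansion\<close>

lemma lookup_weight_le_first_part:
  assumes T: "T \<in> SSYT n lam" and p: "is_partition lam"
  shows "Poly_Mapping.lookup (weight lam T) t \<le> part lam 0"
proof -
  have "Poly_Mapping.lookup (weight lam T) t = card {j. t \<in> col_entries lam T j}"
    by (simp add: lookup_weight card_entries_eq_card_cols[OF T p])
  also have "\<dots> \<le> card {..<part lam 0}"
  proof (rule card_mono)
    show "{j. t \<in> col_entries lam T j} \<subseteq> {..<part lam 0}"
    proof
      fix j assume "j \<in> {j. t \<in> col_entries lam T j}"
      then obtain i where "i < col_len lam j" by (auto simp: col_entries_def)
      hence "(0, j) \<in> cells lam" using cells_iff_col_len[OF p, of 0 j] by simp
      thus "j \<in> {..<part lam 0}" by (simp add: cells_eq_part)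
    qed
  qed simp
  finally show ?thesis by simp
qed

lemma lookup_tuple_weight_le:
  "\<forall>l\<in>set ls. is_partition l \<Longrightarrow> Ts \<in> tableau_tuples n ls \<Longrightarrow> Poly_Mapping.lookup (tuple_weight ls Ts) t \<le> sum_list (map (\<lambda>l. part l 0) ls)"
proof (induction ls arbitrary: Ts)
  case Nil
  then show ?case by simp
next
  case (Cons l ls)
  from Cons.prems(2) obtain T Ts' where Ts: "Ts = T # Ts'" and T: "T \<in> SSYT n l" and Ts': "Ts' \<in> tableau_tuples n ls"
    by auto
  have "Poly_Mapping.lookup (weight l T) t \<le> part l 0" using lookup_weight_le_first_part[OF T] Cons.prems(1) by simp
  moreover have "Poly_Mapping.lookup (tuple_weight ls Ts') t \<le> sum_list (map (\<lambda>l. part l 0) ls)"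
    using Cons.IH[OF _ Ts'] Cons.prems(1) by simp
  ultimately show ?case using Ts by (simp add: lookup_add)
qed

lemma expansion_first_part_le:
  assumes parts: "\<forall>l\<in>set ls. is_partition l"
    and es: "\<forall>nu. e nu \<noteq> 0 \<longrightarrow> nu \<in> partitions_of m \<and> length nu \<le> n"
    and e: "\<forall>b. int (prod_coeff n ls b) = (\<Sum>nu\<in>partitions_of m. e nu * int (kostka n nu b))"
    and width: "sum_list (map (\<lambda>l. part l 0) ls) \<le> a"
    and "e nu \<noteq> 0"
  shows "part nu 0 \<le> a"
proof -
  obtain nu0 where nu0: "e nu0 \<noteq> 0" "nu = nu0 \<or> lex_less n (part nu) (part nu0)"
    and lead: "(\<Sum>mu\<in>partitions_of m. e mu * int (kostka n mu (part_monomial nu0))) = e nu0"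
    using kostka_expansion_leading_term[OF finite_partitions, of m nu n e] es \<open>e nu \<noteq> 0\<close>
    by (auto simp: partitions_of_def)
  have "int (prod_coeff n ls (part_monomial nu0)) = e nu0" using e lead by simp
  with nu0(1) have "prod_coeff n ls (part_monomial nu0) \<noteq> 0" by auto
  then obtain Ts where Ts: "Ts \<in> tableau_tuples n ls" "tuple_weight ls Ts = part_monomial nu0"
    unfolding prod_coeff_def by (metis (mono_tags, lifting) card.empty empty_Collect_eq)
  have "part nu0 0 \<le> a"
    using lookup_tuple_weight_le[OF parts Ts(1), of 0] Ts(2) width by (simp add: lookup_part_monomial)
  moreover have "part nu 0 \<le> part nu0 0" using nu0(2) lex_less_imp_le_0 by auto
  ultimately show ?thesis by simp
qed

lemma expansion_box_compl:
  assumes pairs: "list_all2 (box_compl_pair N N) ls ks" and a: "a = N * length ls"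
    and es: "\<forall>nu. e nu \<noteq> 0 \<longrightarrow> nu \<in> partitions_of m \<and> nu \<in> box a N"
    and e: "\<forall>b. int (prod_coeff N ls b) = (\<Sum>nu\<in>partitions_of m. e nu * int (kostka N nu b))"
    and m: "m \<le> N * a"
  shows "int (prod_coeff N ks g) = (\<Sum>ka\<in>partitions_of (N * a - m). (if ka \<in> box a N then e (box_compl a N ka) else 0) * int (kostka N ka g))"
proof -
  let ?P = "partitions_of m" and ?P' = "partitions_of (N * a - m)"
  have pair: "box_compl_pair N a (box_compl a N ka) ka" if "ka \<in> box a N" for ka
    by (rule box_compl_pair.sym[OF box_compl_pair_box_compl[OF that]])
  have const: "const_weight N (N * length ls) = const_weight N a" by (simp add: a)
  have "(\<Sum>ka\<in>?P'. (if ka \<in> box a N then e (box_compl a N ka) else 0) * int (kostka N ka g))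
      = (\<Sum>ka\<in>?P' \<inter> box a N. e (box_compl a N ka) * int (kostka N ka g))"
    by (auto simp: sum.inter_restrict[OF finite_partitions] intro!: sum.cong)
  also have "\<dots> = int (prod_coeff N ks g)"
  proof (cases "\<exists>b. b + g = const_weight N a")
    case True
    then obtain b where b: "b + g = const_weight N a" by blast
    have "(\<Sum>ka\<in>?P' \<inter> box a N. e (box_compl a N ka) * int (kostka N ka g))
        = (\<Sum>ka\<in>?P' \<inter> box a N. e (box_compl a N ka) * int (kostka N (box_compl a N ka) b))"
      using kostka_box_compl_eq[OF pair b] by simp
    also have "\<dots> = (\<Sum>nu\<in>?P \<inter> box a N. e nu * int (kostka N nu b))"
      by (rule sum.reindex_bij_betw[OF bij_betw_box_compl[OF m], symmetric, THEN trans])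
        (auto simp: box_compl_box_compl intro!: sum.cong)
    also have "\<dots> = (\<Sum>nu\<in>?P. e nu * int (kostka N nu b))"
      by (rule sum.mono_neutral_left[OF finite_partitions]) (use es in auto)
    also have "\<dots> = int (prod_coeff N ks g)"
      using e prod_coeff_box_compl_eq[OF pairs] b const by simp
    finally show ?thesis .
  next
    case False
    then show ?thesis
      using kostka_box_compl_eq_0[OF pair] prod_coeff_box_compl_eq_0[OF pairs] const by simp
  qed
  finally show ?thesis ..
qed

lemma box_compl_pair_eq_box_compl:
  assumes "box_compl_pair N a nu ka"
  shows "nu \<in> box a N" "ka = box_compl a N nu"
proof -
  interpret box_compl_pair N a nu ka by (rule assms)
  show nb: "nu \<in> box a N" unfolding box_def using partition_nu length_nu first_part_nu by simp
  show "ka = box_compl a N nu"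
  proof (rule partition_eqI[OF partition_ka])
    show "is_partition (box_compl a N nu)" using box_compl_in_box[OF nb] by (simp add: box_def)
  qed (simp add: part_ka part_box_compl[OF nb])
qed

lemma box_compl_pairs_partitions:
  "list_all2 (box_compl_pair N a) ls ks \<Longrightarrow> \<forall>l\<in>set ls. is_partition l"
  by (induction rule: list_all2_induct) (auto intro: box_compl_pair.partition_nu)

lemma sum_list_box_compl_pairs:
  "list_all2 (box_compl_pair N a) ls ks
   \<Longrightarrow> sum_list (map sum_list ks) + sum_list (map sum_list ls) = N * a * length ls"
proof (induction rule: list_all2_induct)
  case (Cons l ls k ks)
  have "sum_list k + sum_list l = N * a"
    using box_compl_pair_eq_box_compl[OF Cons.hyps(1)] sum_list_box_compl sum_list_le_box by simp
  with Cons.IH show ?case by (simp add: algebra_simps)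
qed simp

lemma sum_list_first_parts_le:
  "list_all2 (box_compl_pair N a) ls ks \<Longrightarrow> sum_list (map (\<lambda>l. part l 0) ls) \<le> a * length ls"
  by (induction rule: list_all2_induct) (auto intro: add_mono box_compl_pair.first_part_nu)

lemma prod_coeff_expansion_in_box:
  assumes pairs: "list_all2 (box_compl_pair N N) ls ks"
  obtains e where
    "\<forall>nu. e nu \<noteq> 0 \<longrightarrow> nu \<in> partitions_of (sum_list (map sum_list ls)) \<and> nu \<in> box (N * length ls) N"
    "\<forall>b. int (prod_coeff N ls b) = (\<Sum>nu\<in>partitions_of (sum_list (map sum_list ls)). e nu * int (kostka N nu b))"
proof -
  let ?m = "sum_list (map sum_list ls)"
  have parts: "\<forall>l\<in>set ls. is_partition l" by (rule box_compl_pairs_partitions[OF pairs])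
  obtain e where es: "\<forall>nu. e nu \<noteq> 0 \<longrightarrow> nu \<in> partitions_of ?m \<and> length nu \<le> N"
    and e: "\<forall>b. int (prod_coeff N ls b) = (\<Sum>nu\<in>partitions_of ?m. e nu * int (kostka N nu b))"
    using kostka_expansion_exists[of "\<lambda>b. int (prod_coeff N ls b)" N ?m]
      prod_coeff_nonzero_monomials prod_coeff_swap_var[OF parts] by auto
  have "part nu 0 \<le> N * length ls" if "e nu \<noteq> 0" for nu
    using expansion_first_part_le[OF parts es e sum_list_first_parts_le[OF pairs] that] .
  with es have "\<forall>nu. e nu \<noteq> 0 \<longrightarrow> nu \<in> partitions_of ?m \<and> nu \<in> box (N * length ls) N"
    by (auto simp: box_def partitions_of_def)
  then show ?thesis using e by (rule that)
qed

theorem LR_coeff_box_compl: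
  assumes pairs: "list_all2 (box_compl_pair N N) ls ks"
    and mu: "mu \<in> partitions_of (sum_list (map sum_list ls))" "mu \<in> box (N * length ls) N"
  shows "LR_coeff ks (box_compl (N * length ls) N mu) = LR_coeff ls mu"
proof -
  define a where "a = N * length ls"
  let ?m = "sum_list (map sum_list ls)" and ?mu' = "box_compl a N mu"
  obtain e where es: "\<forall>nu. e nu \<noteq> 0 \<longrightarrow> nu \<in> partitions_of ?m \<and> nu \<in> box a N"
    and e: "\<forall>b. int (prod_coeff N ls b) = (\<Sum>nu\<in>partitions_of ?m. e nu * int (kostka N nu b))"
    using prod_coeff_expansion_in_box[OF pairs] unfolding a_def by blast
  have mu_box: "mu \<in> box a N" using mu(2) by (simp add: a_def)
  have m_le: "?m \<le> N * a" using sum_list_le_box[OF mu_box] mu(1) by (simp add: partitions_of_def)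
  have sum_ks: "sum_list (map sum_list ks) = N * a - ?m"
    using sum_list_box_compl_pairs[OF pairs] by (simp add: a_def algebra_simps)
  have mu': "?mu' \<in> partitions_of (N * a - ?m)" "?mu' \<in> box a N"
    using box_compl_in_box[OF mu_box] sum_list_box_compl[OF mu_box] mu(1)
    by (auto simp: box_def partitions_of_def)
  have "LR_coeff ks ?mu' = (if ?mu' \<in> box a N then e (box_compl a N ?mu') else 0)"
  proof (rule LR_coeff_eq_expansion)
    show "\<forall>l\<in>set ks. is_partition l"
      by (rule box_compl_pairs_partitions[OF list_all2_box_compl_pair_sym[OF pairs]])
    show "\<forall>g. int (prod_coeff N ks g) = (\<Sum>ka\<in>partitions_of (sum_list (map sum_list ks)).
        (if ka \<in> box a N then e (box_compl a N ka) else 0) * int (kostka N ka g))"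
      using expansion_box_compl[OF pairs a_def es e m_le] sum_ks by simp
    show "?mu' \<in> partitions_of (sum_list (map sum_list ks))" using mu'(1) sum_ks by simp
    show "length ?mu' \<le> N" using mu'(2) by (simp add: box_def)
  qed
  also have "\<dots> = e mu" using mu'(2) box_compl_box_compl[OF mu_box] by simp
  also have "\<dots> = LR_coeff ls mu"
    using LR_coeff_eq_expansion[OF box_compl_pairs_partitions[OF pairs], of N e mu] e mu(1) mu_box
    by (simp add: box_def)
  finally show ?thesis by (simp add: a_def)
qed

lemma part_rect: "part (rect a b) i = (if i < b \<and> 0 < a then a else 0)"
  by (auto simp: part_def rect_def)

lemma is_partition_rect: "is_partition (rect a b)"
  unfolding is_partition_def rect_def by (auto simp: sorted_wrt_iff_nth_less)

lemma sum_list_rect: "sum_list (rect a b) = a * b"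
  by (simp add: rect_def sum_list_replicate)

lemma length_rect: "length (rect a b) \<le> b"
  by (simp add: rect_def)

lemma rect_in_partitions_of: "rect a b \<in> partitions_of (a * b)"
  using is_partition_rect sum_list_rect by (simp add: partitions_of_def)

lemma box_compl_pair_rect:
  assumes "L \<le> N"
  shows "box_compl_pair N N (rect N L) (rect N (N - L))"
proof
  show "is_partition (rect N L)" "is_partition (rect N (N - L))" by (rule is_partition_rect)+
  show "length (rect N L) \<le> N" using length_rect[of N L] assms by simp
  show "part (rect N L) 0 \<le> N" by (simp add: part_rect)
  fix i
  show "part (rect N (N - L)) i = (if i < N then N - part (rect N L) (N - 1 - i) else 0)"
    using assms by (simp add: part_rect) arith
qed

lemma rect_in_box: "c \<le> a \<Longrightarrow> rect c N \<in> box a N"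
  by (simp add: box_def is_partition_rect length_rect part_rect)

lemma box_compl_rect:
  assumes "c \<le> a"
  shows "box_compl a N (rect c N) = rect (a - c) N"
proof (rule partition_eqI)
  show "is_partition (box_compl a N (rect c N))"
    using box_compl_in_box[OF rect_in_box[OF assms]] by (simp add: box_def)
qed (use assms in \<open>auto simp: is_partition_rect part_box_compl[OF rect_in_box[OF assms]] part_rect\<close>)

theorem theorem6p2:
  fixes N K M :: nat and L :: "nat \<Rightarrow> nat"
  assumes "0 < N"
    and "\<And>i j. 1 \<le> i \<Longrightarrow> i \<le> j \<Longrightarrow> j \<le> K \<Longrightarrow> L j \<le> L i"
    and "1 \<le> K \<Longrightarrow> L 1 \<le> N"
    and "M = (\<Sum>i=1..K. L i)"
  shows "LR_coeff (map (\<lambda>i. rect N (L i)) [1..<K+1]) (rect M N)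
       = LR_coeff (map (\<lambda>i. rect N (N - L i)) [1..<K+1]) (rect (K * N - M) N)"
proof -
  let ?ls = "map (\<lambda>i. rect N (L i)) [1..<K+1]" and ?ks = "map (\<lambda>i. rect N (N - L i)) [1..<K+1]"
  have L_le: "L i \<le> N" if "i \<in> {1..K}" for i
    using assms(2)[of 1 i] assms(3) that by force
  have pairs: "list_all2 (box_compl_pair N N) ?ls ?ks"
    unfolding list_all2_map1 list_all2_map2 list_all2_same
    by (auto intro!: box_compl_pair_rect L_le)
  have "M \<le> (\<Sum>i=1..K. N)" unfolding assms(4) by (rule sum_mono) (rule L_le)
  hence M_le: "M \<le> N * K" by (simp add: mult.commute)
  have "sum_list (map sum_list ?ls) = (\<Sum>i\<in>{1..<K+1}. N * L i)"
    by (simp add: sum_list_rect comp_def sum_set_upt_conv_sum_list_nat[symmetric])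
  also have "\<dots> = N * M" unfolding assms(4) sum_distrib_left by (simp add: atLeastLessThanSuc_atLeastAtMost)
  finally have "rect M N \<in> partitions_of (sum_list (map sum_list ?ls))"
    using rect_in_partitions_of[of M N] by (simp add: mult.commute)
  from LR_coeff_box_compl[OF pairs this] rect_in_box[OF M_le]
  have "LR_coeff ?ks (box_compl (N * K) N (rect M N)) = LR_coeff ?ls (rect M N)"
    by (simp only: length_map length_upt diff_add_inverse2)
  moreover have "box_compl (N * K) N (rect M N) = rect (K * N - M) N"
    using box_compl_rect[OF M_le] by (simp add: mult.commute)
  ultimately show ?thesis by simp
qed

end
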